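(* Let $\underline{\mathbb{G}}=(\mathbb{G},\mathcal{V},\omega_{\mathcal{V}},\mathcal{F},\omega_{\mathcal{F}})$ be a packaged ribbon graph and $e$ an edge of $\mathbb{G}$. Then \[\boldsymbol{T}(\underline{\mathbb{G}};\boldsymbol{x},\boldsymbol{y}) = x^{2-\eta(e)}\boldsymbol{T}(\underline{\mathbb{G}}\backslash e;\boldsymbol{x},\boldsymbol{y})+y^{2-\mu(e)}\boldsymbol{T}(\underline{\mathbb{G}}/e;\boldsymbol{x},\boldsymbol{y}).\] If $\mathbb{G}$ has no edges, then \[\boldsymbol{T}(\underline{\mathbb{G}};\boldsymbol{x},\boldsymbol{y})=\prod_{[f]\in \mathcal{F}} x_{(1- |[f]| +\omega_{\mathcal{F}}([f]))/2} \prod_{[v]\in\mathcal{V}} y_{(1-|[v]| +\omega_{\mathcal{V}}([v]))/2},\] where $|[a]|$ is the number of elements of the block $[a]$.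
   Context: All ribbon graphs are orientable. A ribbon graph $\mathbb{G}=(V,E)$ is an orientable surface with boundary formed as a union of discs $V$ (vertices) and discs $E$ (edges) such that vertices and edges meet in disjoint arcs, each arc lies on the boundary of exactly one vertex and one edge, and each edge contains exactly two such arcs. For a ribbon graph, $v,e,f,k$ denote numbers of vertices, edges, boundary components, components. For a graph, $v,e,k$ are numbers of vertices, edges, components, and nullity $n=e-v+k$. $\mathbb{G}\backslash e$ removes edge $e$; $\mathbb{G}|A$ (for $A\subseteq E$) is the spanning ribbon subgraph with edge set $A$; $A^c=E\setminus A$. $\mathbb{G}/e$ (contraction) is obtained by taking the boundary curve(s) of $e\cup u\cup v$ ($u,v$ the ends of $e$), attaching a disc to each curve as a new vertex, and removing $e,u,v$. The dual $\mathbb{G}^*$ is obtained by capping each boundary component of $\mathbb{G}$ with a disc; these discs are the vertices of $\mathbb{G}^*$ and the edges are those of $\mathbb{G}$; so vertices of $\mathbb{G}^*$ are identified with boundary components of $\mathbb{G}$ and vice versa. A packaged ribbon graph is a tuple $\underline{\mathbb{G}}=(\mathbb{G},\mathcal{V},\omega_{\mathcal{V}},\mathcal{F},\omega_{\mathcal{F}})$ where $\mathbb{G}=(V,E)$ is a ribbon graph with set of boundary components $F$, $\mathcal{V}$ a partition of $V$, $\mathcal{F}$ a partition of $F$, and $\omega_{\mathcal{V}}:\mathcal{V}\to\mathbb{N}_0$, $\omega_{\mathcal{F}}:\mathcal{F}\to\mathbb{N}_0$ weightings; $[v]$, $[f]$ denote blocks. For an edge $e$, $\eta(e)$ is the number of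 blocks of $\mathcal{F}$ containing a boundary component meeting $e$, and $\mu(e)$ is the number of blocks of $\mathcal{V}$ containing a vertex incident with $e$ (each is 1 or 2). Deletion $\underline{\mathbb{G}}\backslash e$: ribbon graph $\mathbb{G}\backslash e$, $\mathcal{V},\omega_{\mathcal{V}}$ unchanged, boundary components not meeting $e$ keep blocks/weights. (i) If $e$ meets a single boundary component $f$, deletion creates $f',g'$ replacing $f$; $[f]$ becomes $([f]\setminus\{f\})\cup\{f',g'\}$ with weight $\omega_{\mathcal{F}}([f])+1$. (ii) If $e$ meets $f\neq g$ with $[f]=[g]$, deletion creates one component $f'$; block becomes $([f]\setminus\{f,g\})\cup\{f'\}$ with weight $\omega_{\mathcal{F}}([f])+1$. (iii) If $e$ meets $f\neq g$ with $[f]\ne[g]$, the blocks $[f],[g]$ are replaced by $([f]\cup[g]\setminus\{f,g\})\cup\{f'\}$ with weight $\omega_{\mathcal{F}}([f])+\omega_{\mathcal{F}}([g])$. Contraction $\underline{\mathbb{G}}/e$: ribbon graph $\mathbb{G}/e$, $\mathcal{F},\omega_{\mathcal{F}}$ transported via the natural correspondence of boundary components. (i) If $e$ is a loop at $u$, contraction creates two vertices $u',v'$ replacing $u$; $[u]$ becomes $([u]\setminus\{u\})\cup\{u',v'\}$ with weight $\omega_{\mathcal{V}}([u])+1$. (ii) If $e$ has ends $u\neq v$ with $[u]=[v]$, merged vertex $u'$; block becomes $([u]\setminus\{u,v\})\cup\{u'\}$ with weight $\omega_{\mathcal{V}}([u])+1$. (iii) If $[u]\neq[v]$, blocks $[u],[v]$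 replaced by $([u]\cup[v]\setminus\{u,v\})\cup\{u'\}$ with weight $\omega_{\mathcal{V}}([u])+\omega_{\mathcal{V}}([v])$. Other blocks/weights unchanged in all cases. Packaging: for a ribbon graph $\mathbb{H}$ with a partition $\mathcal{P}$ of its vertex set and block weights $\omega$, $G(\mathbb{H};\mathcal{P})$ is the graph with vertex set $\mathcal{P}$ and one edge $([u],[v])$ for each edge $(u,v)$ of $\mathbb{H}$ (loops and multiple edges allowed), vertices weighted by $\omega$. For a subgraph $K$ of $G(\mathbb{H};\mathcal{P})$, $\mathbb{H}[K]$ is the ribbon subgraph of $\mathbb{H}$ whose vertices are all vertices of $\mathbb{H}$ lying in blocks that are vertices of $K$ and whose edges are those corresponding to edges of $K$; $f(\mathbb{H}[K])$ is its number of boundary components; $\omega(K)=\sum_{[v]\in V(K)}\omega([v])$. Here $G(\mathbb{G}|A;\mathcal{V})$ uses $\mathcal{V},\omega_{\mathcal{V}}$, and $G(\mathbb{G}^*|A^c;\mathcal{F})$ uses $\mathcal{F},\omega_{\mathcal{F}}$ as a partition (with weights) of the vertex set of $\mathbb{G}^*$. The packaged surface Tutte polynomial, with variables $\boldsymbol{x}=(x,x_0,x_{1/2},x_1,\dots)$, $\boldsymbol{y}=(y,y_0,y_{1/2},y_1,\dots)$, is \[\boldsymbol{T}(\underline{\mathbb{G}};\boldsymbol{x},\boldsymbol{y})= \sum_{A\subseteq E} x^{n(G(\mathbb{G}^*|A^c;\mathcal{F}))}y^{n(G(\mathbb{G}|A;\mathcal{V}))}\prod_{H \text{ cpt. of }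 G(\mathbb{G}^*|A^c;\mathcal{F})}x_{g(\mathbb{G}^*,H)}\prod_{K \text{ cpt. of } G(\mathbb{G}|A;\mathcal{V})}y_{g(\mathbb{G},K)},\] where $g(\mathbb{G},K)=\tfrac12(2k(K)+e(K)-v(K)+\omega_{\mathcal{V}}(K)-f(\mathbb{G}[K]))$ and $g(\mathbb{G}^*,H)=\tfrac12(2k(H)+e(H)-v(H)+\omega_{\mathcal{F}}(H)-f(\mathbb{G}^*[H]))$. *)

theory Defs
  imports "HOL-Combinatorics.Permutations"
begin

(* Orientable ribbon graphs are encoded as combinatorial maps (rotation systems).
   darts : finite set of darts (half-edges);
   sig   : vertex rotation (permutation of darts), vertices = sig-orbits;
   alp   : edge involution, edges = alp-orbits {x, alp x} of size 2;
   faces (boundary components) = orbits of sig o alp.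
   An isolated vertex (no incident edge) is encoded by a "marker" dart m with
   alp m = m and sig m = m: it forms one vertex and one boundary component.
   The partition V of vertices is encoded by a labelling vlab of darts that is
   constant on vertices (blocks = label values), with block weights wV;
   likewise the partition F of boundary components by flab (constant on faces)
   and weights wF. *)

record ('d, 'b, 'c) pmap =
  darts :: "'d set"
  sig   :: "'d \<Rightarrow> 'd"
  alp   :: "'d \<Rightarrow> 'd"
  vlab  :: "'d \<Rightarrow> 'b"
  flab  :: "'d \<Rightarrow> 'c"
  wV    :: "'b \<Rightarrow> nat"
  wF    :: "'c \<Rightarrow> nat"

definition phi :: "('d, 'b, 'c) pmap \<Rightarrow> 'd \<Rightarrow> 'd" where
  "phi P = sig P \<circ> alp P"

definition packaged_ribbon_graph :: "('d, 'b, 'c) pmap \<Rightarrow> bool" where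
  "packaged_ribbon_graph P \<longleftrightarrow>
     finite (darts P) \<and> (sig P permutes darts P) \<and> (alp P permutes darts P) \<and>
     (\<forall>x\<in>darts P. alp P (alp P x) = x) \<and>
     (\<forall>x\<in>darts P. alp P x = x \<longrightarrow> sig P x = x) \<and>
     (\<forall>x\<in>darts P. vlab P (sig P x) = vlab P x) \<and>
     (\<forall>x\<in>darts P. flab P (phi P x) = flab P x)"

definition orb :: "('d \<Rightarrow> 'd) \<Rightarrow> 'd \<Rightarrow> 'd set" where
  "orb f x = range (\<lambda>n. (f ^^ n) x)"

definition orbits :: "('d \<Rightarrow> 'd) \<Rightarrow> 'd set \<Rightarrow> 'd set set" where
  "orbits f S = orb f ` S"

definition edges :: "('d, 'b, 'c) pmap \<Rightarrow> 'd set set" where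
  "edges P = {{x, alp P x} | x. x \<in> darts P \<and> alp P x \<noteq> x}"

definition vertices :: "('d, 'b, 'c) pmap \<Rightarrow> 'd set set" where
  "vertices P = orbits (sig P) (darts P)"

definition faces :: "('d, 'b, 'c) pmap \<Rightarrow> 'd set set" where
  "faces P = orbits (phi P) (darts P)"

definition eta :: "('d, 'b, 'c) pmap \<Rightarrow> 'd \<Rightarrow> nat" where
  "eta P d = card {flab P d, flab P (alp P d)}"

definition mu :: "('d, 'b, 'c) pmap \<Rightarrow> 'd \<Rightarrow> nat" where
  "mu P d = card {vlab P d, vlab P (alp P d)}"

definition skip :: "('d \<Rightarrow> 'd) \<Rightarrow> 'd \<Rightarrow> 'd \<Rightarrow> 'd \<Rightarrow> 'd" where
  "skip p d d' x =
     (if p x \<notin> {d, d'} then p x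
      else if p (p x) \<notin> {d, d'} then p (p x) else p (p (p x)))"

(* darts kept as markers of isolated vertices created by the removal *)
definition markers :: "('d \<Rightarrow> 'd) \<Rightarrow> 'd \<Rightarrow> 'd \<Rightarrow> 'd set" where
  "markers p d d' =
     {y \<in> {d, d'}. p y = y} \<union> (if p d = d' \<and> p d' = d then {d} else {})"

definition new_darts :: "'d set \<Rightarrow> ('d \<Rightarrow> 'd) \<Rightarrow> 'd \<Rightarrow> 'd \<Rightarrow> 'd set" where
  "new_darts D p d d' = (D - {d, d'}) \<union> markers p d d'"

definition new_perm :: "'d set \<Rightarrow> ('d \<Rightarrow> 'd) \<Rightarrow> 'd \<Rightarrow> 'd \<Rightarrow> 'd \<Rightarrow> 'd" where
  "new_perm D p d d' x = (if x \<in> D - {d, d'} then skip p d d' x else x)"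

definition new_alp :: "('d \<Rightarrow> 'd) \<Rightarrow> ('d \<Rightarrow> 'd) \<Rightarrow> 'd \<Rightarrow> 'd \<Rightarrow> 'd \<Rightarrow> 'd" where
  "new_alp a p d d' x = (if x \<in> markers p d d' then x else a x)"

definition pdelete :: "('d, 'b, 'c) pmap \<Rightarrow> 'd \<Rightarrow> ('d, 'b, 'c) pmap" where
  "pdelete P d =
    (let d' = alp P d; s = sig P; c1 = flab P d; c2 = flab P d' in
     P\<lparr> darts := new_darts (darts P) s d d',
        sig := new_perm (darts P) s d d',
        alp := new_alp (alp P) s d d',
        flab := (if c1 = c2 then flab P
                 else (\<lambda>x. if flab P x = c2 then c1 else flab P x)),
        wF := (if c1 = c2 then (wF P)(c1 := wF P c1 + 1)
               else (wF P)(c1 := wF P c1 + wF P c2)) \<rparr>)"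

(* ---------- packaged contraction of the edge e = {d, alp d} ----------
   Combinatorially: remove the edge from the face permutation phi = sig o alp
   (i.e. delete e in the dual) and recover the vertex rotation as phi' o alp'. *)

definition pcontract :: "('d, 'b, 'c) pmap \<Rightarrow> 'd \<Rightarrow> ('d, 'b, 'c) pmap" where
  "pcontract P d =
    (let d' = alp P d; f = phi P; a' = new_alp (alp P) f d d';
         f' = new_perm (darts P) f d d'; b1 = vlab P d; b2 = vlab P d' in
     P\<lparr> darts := new_darts (darts P) f d d',
        sig := f' \<circ> a',
        alp := a',
        vlab := (if b1 = b2 then vlab P
                 else (\<lambda>x. if vlab P x = b2 then b1 else vlab P x)),
        wV := (if b1 = b2 then (wV P)(b1 := wV P b1 + 1)
               else (wV P)(b1 := wV P b1 + wV P b2)) \<rparr>)"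

(* rotation of the spanning ribbon subgraph with dart set S (first return map) *)
definition sub_perm :: "('d \<Rightarrow> 'd) \<Rightarrow> 'd set \<Rightarrow> 'd \<Rightarrow> 'd" where
  "sub_perm s S x = (s ^^ (LEAST k. 0 < k \<and> (s ^^ k) x \<in> S)) x"

(* boundary components of the spanning ribbon subgraph keeping the edges in A,
   for the map with dart set D, vertex rotation s and edge involution a *)
definition sub_faces :: "'d set \<Rightarrow> ('d \<Rightarrow> 'd) \<Rightarrow> ('d \<Rightarrow> 'd) \<Rightarrow> 'd set set \<Rightarrow> 'd set set" where
  "sub_faces D s a A =
     (let S = \<Union>A in
      orbits (sub_perm s S \<circ> a) S \<union> {orb s x | x. x \<in> D \<and> orb s x \<inter> S = {}})"

(* the vertex set (blocks) of the packaged graph G(H;P) *)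
definition blocks :: "'d set \<Rightarrow> ('d \<Rightarrow> 'b) \<Rightarrow> 'b set" where
  "blocks D lab = lab ` D"

(* connected component of block b in G(H|A;P) *)
definition comp :: "'d set \<Rightarrow> ('d \<Rightarrow> 'd) \<Rightarrow> ('d \<Rightarrow> 'b) \<Rightarrow> 'd set set \<Rightarrow> 'b \<Rightarrow> 'b set" where
  "comp D a lab A b =
     (let R = {(lab x, lab (a x)) | x. x \<in> \<Union>A} in
      {b' \<in> blocks D lab. (b, b') \<in> (R \<union> R\<inverse>)\<^sup>*})"

definition comps :: "'d set \<Rightarrow> ('d \<Rightarrow> 'd) \<Rightarrow> ('d \<Rightarrow> 'b) \<Rightarrow> 'd set set \<Rightarrow> 'b set set" where
  "comps D a lab A = comp D a lab A ` blocks D lab"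

definition nullity :: "'d set \<Rightarrow> ('d \<Rightarrow> 'd) \<Rightarrow> ('d \<Rightarrow> 'b) \<Rightarrow> 'd set set \<Rightarrow> nat" where
  "nullity D a lab A = card A + card (comps D a lab A) - card (blocks D lab)"

(* twice the genus-like quantity g(H,K) = (2k(K)+e(K)-v(K)+w(K)-f(H[K]))/2 *)
definition twice_g :: "'d set \<Rightarrow> ('d \<Rightarrow> 'd) \<Rightarrow> ('d \<Rightarrow> 'd) \<Rightarrow> ('d \<Rightarrow> 'b) \<Rightarrow> ('b \<Rightarrow> nat)
                         \<Rightarrow> 'd set set \<Rightarrow> 'b set \<Rightarrow> int" where
  "twice_g D s a lab w A K =
     2 + int (card {ed \<in> A. \<exists>x\<in>ed. lab x \<in> K}) - int (card K) + int (\<Sum>b\<in>K. w b)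
       - int (card {Fc \<in> sub_faces D s a A. \<exists>x\<in>Fc. lab x \<in> K})"

(* one half of a term of the sum; the variable family z is indexed by twice the subscript:
   z k stands for the variable z_{k/2} *)
definition half_term :: "'d set \<Rightarrow> ('d \<Rightarrow> 'd) \<Rightarrow> ('d \<Rightarrow> 'd) \<Rightarrow> ('d \<Rightarrow> 'b) \<Rightarrow> ('b \<Rightarrow> nat)
                         \<Rightarrow> 'd set set \<Rightarrow> 'a::comm_ring_1 \<Rightarrow> (int \<Rightarrow> 'a) \<Rightarrow> 'a" where
  "half_term D s a lab w A z zs =
     z ^ nullity D a lab A * (\<Prod>K\<in>comps D a lab A. zs (twice_g D s a lab w A K))"

(* packaged surface Tutte polynomial, evaluated at x, xs (xs k = x_{k/2}), y, ys (ys k = y_{k/2});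
   the dual G* has vertex rotation phi and the same edges, its vertex partition is F *)
definition pTutte :: "('d, 'b, 'c) pmap \<Rightarrow> 'a::comm_ring_1 \<Rightarrow> (int \<Rightarrow> 'a) \<Rightarrow> 'a \<Rightarrow> (int \<Rightarrow> 'a) \<Rightarrow> 'a" where
  "pTutte P x xs y ys =
     (\<Sum>A\<in>Pow (edges P).
        half_term (darts P) (phi P) (alp P) (flab P) (wF P) (edges P - A) x xs *
        half_term (darts P) (sig P) (alp P) (vlab P) (wV P) A y ys)"

definition vblock_size :: "('d, 'b, 'c) pmap \<Rightarrow> 'b \<Rightarrow> nat" where
  "vblock_size P b = card {v \<in> vertices P. \<exists>x\<in>v. vlab P x = b}"

definition fblock_size :: "('d, 'b, 'c) pmap \<Rightarrow> 'c \<Rightarrow> nat" where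
  "fblock_size P c = card {f \<in> faces P. \<exists>x\<in>f. flab P x = c}"

end

(*
  Each term of the packaged surface Tutte polynomial belongs to a spanning subgraph A and is the
  product of a vertex factor, read off from G|A and its packaged graph, and a face factor, read off
  in the same way from the dual restricted to the complement of A. Since contracting e in G is
  deleting e in the dual, splitting the sum according to whether e lies in A reduces the recursion
  to two local facts about a factor: deleting an edge outside A changes neither the packaged graph
  nor the boundary components, while contracting an edge of A either merges two blocks, whose
  weights add, or is a loop of the packaged graph, which lowers the nullity by one and adds one to
  the weight of its block; in both cases every g(G, K) is unchanged. Boundary components of
  spanning subgraphs are orbits of a face permutation, and removing the two darts of an edge
  replaces it by its first-return map on the remaining darts, whose orbits are the traces of the
  old ones. For an edgeless graph every block is its own component.
*)
theory Submission
  imports Defs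
begin

definition perm_on :: "('d \<Rightarrow> 'd) \<Rightarrow> 'd set \<Rightarrow> bool" where
  "perm_on g D \<longleftrightarrow> finite D \<and> (\<forall>x\<in>D. g x \<in> D) \<and> inj_on g D"

abbreviation involution_on :: "('d \<Rightarrow> 'd) \<Rightarrow> 'd set \<Rightarrow> bool" where
  "involution_on a D \<equiv> \<forall>x\<in>D. a x \<in> D \<and> a (a x) = x"

lemma perm_on_in: "perm_on g D \<Longrightarrow> x \<in> D \<Longrightarrow> g x \<in> D"
  by (auto simp: perm_on_def)

lemma funpow_closed: "\<forall>x\<in>D. g x \<in> D \<Longrightarrow> x \<in> D \<Longrightarrow> (g ^^ n) x \<in> D"
  by (induction n) auto

lemma perm_on_funpow_in: "perm_on g D \<Longrightarrow> x \<in> D \<Longrightarrow> (g ^^ n) x \<in> D"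
  by (simp add: funpow_closed perm_on_def)

lemma perm_on_bij_betw: "perm_on g D \<Longrightarrow> bij_betw g D D"
  unfolding perm_on_def bij_betw_def by (metis endo_inj_surj image_subsetI)

lemma perm_on_inj_on_funpow: "perm_on g D \<Longrightarrow> inj_on (g ^^ n) D"
  using bij_betw_funpow[OF perm_on_bij_betw] bij_betw_imp_inj_on by blast

lemma perm_on_cong: "perm_on g D \<Longrightarrow> \<forall>y\<in>D. g y = h y \<Longrightarrow> perm_on h D"
  unfolding perm_on_def inj_on_def by auto

lemma perm_on_comp:
  assumes "perm_on g D" "perm_on h D" shows "perm_on (g \<circ> h) D"
proof -
  have "inj_on g (h ` D)" "inj_on h D"
    using assms inj_on_subset[of g D "h ` D"] unfolding perm_on_def by auto
  then show ?thesis using assms comp_inj_on unfolding perm_on_def by auto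
qed

lemma perm_on_involution:
  assumes "finite D" "involution_on a D" shows "perm_on a D"
  using assms unfolding perm_on_def by (auto intro!: inj_onI) (metis)

lemma permutes_perm_on: "finite D \<Longrightarrow> s permutes D \<Longrightarrow> perm_on s D"
  unfolding perm_on_def by (simp add: permutes_inj_on permutes_in_image)

lemma funpow_diff_apply:
  assumes "i \<le> j"
  shows "(g ^^ (j - i)) ((g ^^ i) x) = (g ^^ j) x" "(g ^^ i) ((g ^^ (j - i)) x) = (g ^^ j) x"
proof -
  have "(g ^^ (j - i)) ((g ^^ i) x) = (g ^^ (j - i + i)) x"
    "(g ^^ i) ((g ^^ (j - i)) x) = (g ^^ (i + (j - i))) x"
    by (simp_all only: funpow_add comp_apply)
  then show "(g ^^ (j - i)) ((g ^^ i) x) = (g ^^ j) x" "(g ^^ i) ((g ^^ (j - i)) x) = (g ^^ j) x"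
    using assms by simp_all
qed

lemma perm_on_funpow_cancel:
  assumes "perm_on g D" "x \<in> D" "(g ^^ i) x = (g ^^ j) x" "i \<le> j"
  shows "(g ^^ (j - i)) x = x"
proof -
  have "(g ^^ i) ((g ^^ (j - i)) x) = (g ^^ i) x"
    using funpow_diff_apply(2)[OF assms(4)] assms(3) by simp
  then show ?thesis
    using perm_on_inj_on_funpow[OF assms(1)] perm_on_funpow_in[OF assms(1,2)] assms(2)
    by (meson inj_onD)
qed

lemma perm_on_periodic:
  assumes "perm_on g D" "x \<in> D"
  shows "\<exists>n>0. (g ^^ n) x = x"
proof -
  have "(\<lambda>n. (g ^^ n) x) ` {..card D} \<subseteq> D"
    using perm_on_funpow_in[OF assms] by auto
  then have "card ((\<lambda>n. (g ^^ n) x) ` {..card D}) \<le> card D"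
    using assms(1) card_mono unfolding perm_on_def by blast
  then have "\<not> inj_on (\<lambda>n. (g ^^ n) x) {..card D}"
    using card_image by fastforce
  then obtain i j where "i < j" "(g ^^ i) x = (g ^^ j) x"
    unfolding inj_on_def by (metis linorder_neqE_nat)
  then show ?thesis
    using perm_on_funpow_cancel[OF assms] by (metis less_imp_le zero_less_diff)
qed

lemma orb_self: "x \<in> orb g x"
  unfolding orb_def by (metis funpow_0 rangeI)

lemma orb_funpow: "(g ^^ n) x \<in> orb g x"
  unfolding orb_def by auto

lemma orb_apply: "g x \<in> orb g x"
  using orb_funpow[of 1 g x] by simp

lemma orb_trans: "y \<in> orb g x \<Longrightarrow> orb g y \<subseteq> orb g x"
  unfolding orb_def by (auto simp: funpow_add[symmetric, THEN fun_cong, simplified])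

lemma orb_subset: "perm_on g D \<Longrightarrow> x \<in> D \<Longrightarrow> orb g x \<subseteq> D"
  unfolding orb_def using perm_on_funpow_in by fastforce

lemma orb_sym:
  assumes "perm_on g D" "x \<in> D" "y \<in> orb g x"
  shows "x \<in> orb g y"
proof -
  obtain k where k: "y = (g ^^ k) x" using assms(3) unfolding orb_def by auto
  obtain p where p: "p > 0" "(g ^^ p) x = x" using perm_on_periodic[OF assms(1,2)] by auto
  have "(g ^^ (k * p)) x = x" using funpow_mod_eq[where f = g and n = p and m = "k * p"] p(2) by simp
  moreover have "k \<le> k * p" using p(1) by simp
  ultimately have "(g ^^ (k * p - k)) y = x"
    unfolding k using funpow_diff_apply(1)[of k "k * p" g x] by simp
  then show ?thesis using orb_funpow[of "k * p - k" g y] by simp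
qed

lemma orb_eq:
  assumes "perm_on g D" "x \<in> D" "y \<in> orb g x"
  shows "orb g y = orb g x"
  using orb_trans[OF assms(3)] orb_trans[OF orb_sym[OF assms]] by (rule subset_antisym)

lemma orb_disjoint_or_eq:
  assumes "perm_on g D" "x \<in> D" "y \<in> D" "orb g x \<inter> orb g y \<noteq> {}"
  shows "orb g x = orb g y"
proof -
  obtain z where "z \<in> orb g x" "z \<in> orb g y" using assms(4) by auto
  then show ?thesis using orb_eq[OF assms(1,2)] orb_eq[OF assms(1,3)] by metis
qed

lemma orb_fixpoint: "g x = x \<Longrightarrow> orb g x = {x}"
proof -
  assume "g x = x"
  then have "(g ^^ n) x = x" for n by (induction n) auto
  then show ?thesis unfolding orb_def by auto
qed

lemma orb_swap: "g x = y \<Longrightarrow> g y = x \<Longrightarrow> orb g x = {x, y}"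
proof -
  assume "g x = y" "g y = x"
  then have "(g ^^ n) x \<in> {x, y}" for n by (induction n) auto
  then show ?thesis
    using orb_self[of x g] orb_apply[of g x] \<open>g x = y\<close> unfolding orb_def by auto
qed

lemma funpow_cong_on:
  assumes "\<forall>y\<in>X. g y = h y" "\<forall>y\<in>X. g y \<in> X" "x \<in> X"
  shows "(g ^^ n) x = (h ^^ n) x"
proof (induction n)
  case (Suc n)
  have "(g ^^ n) x \<in> X" using funpow_closed assms(2,3) .
  then show ?case using Suc assms(1) by simp
qed simp

lemma orb_cong:
  assumes "\<forall>y\<in>X. g y = h y" "\<forall>y\<in>X. g y \<in> X" "x \<in> X"
  shows "orb g x = orb h x"
  unfolding orb_def using funpow_cong_on[OF assms] by auto

lemma orb_cong_orb:
  assumes "\<forall>y\<in>orb h x. g y = h y" shows "orb g x = orb h x"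
proof -
  have "\<forall>y\<in>orb h x. h y \<in> orb h x"
    using orb_trans[of _ h x] orb_apply[of h] by (auto simp: subset_iff)
  then have "orb h x = orb g x"
    using orb_cong[of "orb h x" h g x] assms orb_self[of x h] by auto
  then show ?thesis by simp
qed

lemma orbitsI: "x \<in> D \<Longrightarrow> orb g x \<in> orbits g D"
  unfolding orbits_def by auto

lemma orbitsE: "Ob \<in> orbits g D \<Longrightarrow> (\<And>x. x \<in> D \<Longrightarrow> Ob = orb g x \<Longrightarrow> P) \<Longrightarrow> P"
  unfolding orbits_def by auto

lemma orbits_cong:
  assumes "\<forall>y\<in>X. g y = h y" "\<forall>y\<in>X. g y \<in> X"
  shows "orbits g X = orbits h X"
  unfolding orbits_def by (rule image_cong) (simp_all add: orb_cong[OF assms])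

lemma funpow_reaches_with_label:
  assumes g: "perm_on g D" and z: "z \<in> D" and ex: "\<exists>n. (g ^^ n) z \<in> T"
    and L: "\<forall>y\<in>D - T. L (g y) = L y"
  shows "\<exists>n. (g ^^ n) z \<in> T \<and> L ((g ^^ n) z) = L z"
proof -
  define n where "n = (LEAST n. (g ^^ n) z \<in> T)"
  have "j \<le> n \<Longrightarrow> L ((g ^^ j) z) = L z" for j
  proof (induction j)
    case (Suc j)
    have "(g ^^ j) z \<notin> T" using not_less_Least[of j "\<lambda>n. (g ^^ n) z \<in> T"] Suc.prems
      unfolding n_def by auto
    then show ?case using Suc L perm_on_funpow_in[OF g z, of j] by simp
  qed simp
  then show ?thesis using LeastI_ex[OF ex] unfolding n_def by blast
qed

lemma orb_label_const:
  assumes "orb g x \<subseteq> X" "\<forall>y\<in>X. L (g y) = L y"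
  shows "\<forall>y\<in>orb g x. L y = L x"
proof -
  have "L ((g ^^ n) x) = L x" for n
  proof (induction n)
    case (Suc n)
    have "(g ^^ n) x \<in> X" using assms(1) orb_funpow[of n g x] by blast
    then show ?case using Suc assms(2) by simp
  qed simp
  then show ?thesis unfolding orb_def by auto
qed

section \<open>First-return maps\<close>

lemma sub_perm_first_return:
  assumes g: "perm_on g D" and T: "T \<subseteq> D" and x: "x \<in> T"
  obtains k where "0 < k" "(g ^^ k) x \<in> T" "sub_perm g T x = (g ^^ k) x"
    "\<And>j. 0 < j \<Longrightarrow> j < k \<Longrightarrow> (g ^^ j) x \<notin> T"
proof -
  obtain n where "0 < n" "(g ^^ n) x = x"
    using perm_on_periodic[OF g, of x] x T by auto
  then have ex: "\<exists>k. 0 < k \<and> (g ^^ k) x \<in> T"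
    using x by auto
  define k where "k = (LEAST k. 0 < k \<and> (g ^^ k) x \<in> T)"
  show ?thesis
  proof
    show "0 < k" "(g ^^ k) x \<in> T" using LeastI_ex[OF ex] unfolding k_def by auto
    show "sub_perm g T x = (g ^^ k) x" unfolding sub_perm_def k_def ..
    show "(g ^^ j) x \<notin> T" if "0 < j" "j < k" for j
      using not_less_Least[of j "\<lambda>k. 0 < k \<and> (g ^^ k) x \<in> T"] that unfolding k_def by auto
  qed
qed

lemma sub_perm_in:
  assumes "perm_on g D" "T \<subseteq> D" "x \<in> T"
  shows "sub_perm g T x \<in> T" "sub_perm g T x \<in> orb g x"
proof -
  obtain k where "(g ^^ k) x \<in> T" "sub_perm g T x = (g ^^ k) x"
    using sub_perm_first_return[OF assms] by blast
  then show "sub_perm g T x \<in> T" "sub_perm g T x \<in> orb g x" by (simp_all add: orb_funpow)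
qed

lemma perm_on_sub_perm:
  assumes g: "perm_on g D" and T: "T \<subseteq> D"
  shows "perm_on (sub_perm g T) T"
proof -
  have earlier_return: "u = v"
    if u: "u \<in> T" and v: "v \<in> T" and le: "0 < ku" "ku \<le> kv"
      and eq: "(g ^^ ku) u = (g ^^ kv) v" and kv: "\<forall>j. 0 < j \<longrightarrow> j < kv \<longrightarrow> (g ^^ j) v \<notin> T"
    for u v ku kv
  proof -
    have "(g ^^ ku) ((g ^^ (kv - ku)) v) = (g ^^ ku) u"
      using eq funpow_diff_apply(2)[OF le(2), of g v] by simp
    then have "(g ^^ (kv - ku)) v = u"
      using perm_on_inj_on_funpow[OF g, of ku] perm_on_funpow_in[OF g, of v "kv - ku"] u v T
      by (auto dest: inj_onD)
    then show "u = v" using kv u le by (cases "ku = kv") auto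
  qed
  have "inj_on (sub_perm g T) T"
  proof (rule inj_onI)
    fix u v assume u: "u \<in> T" and v: "v \<in> T" and eq: "sub_perm g T u = sub_perm g T v"
    obtain ku where ku: "0 < ku" "sub_perm g T u = (g ^^ ku) u" "\<forall>j. 0 < j \<longrightarrow> j < ku \<longrightarrow> (g ^^ j) u \<notin> T"
      using sub_perm_first_return[OF g T u] by auto
    obtain kv where kv: "0 < kv" "sub_perm g T v = (g ^^ kv) v" "\<forall>j. 0 < j \<longrightarrow> j < kv \<longrightarrow> (g ^^ j) v \<notin> T"
      using sub_perm_first_return[OF g T v] by auto
    show "u = v"
    proof (cases "ku \<le> kv")
      case True
      then show ?thesis using earlier_return[OF u v ku(1) True] eq ku kv by simp
    next
      case False
      then show ?thesis using earlier_return[OF v u kv(1), of ku] eq ku kv by simp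
    qed
  qed
  then show ?thesis
    using g T finite_subset sub_perm_in(1)[OF g T] unfolding perm_on_def by blast
qed

lemma orb_sub_perm:
  assumes g: "perm_on g D" and T: "T \<subseteq> D" and x: "x \<in> T"
  shows "orb (sub_perm g T) x = orb g x \<inter> T"
proof
  let ?r = "sub_perm g T"
  have "(?r ^^ n) x \<in> orb g x \<inter> T" for n
  proof (induction n)
    case (Suc n)
    then have "(?r ^^ n) x \<in> T" "orb g ((?r ^^ n) x) \<subseteq> orb g x"
      using orb_trans[of "(?r ^^ n) x" g x] by auto
    then show ?case using sub_perm_in(2)[OF g T] sub_perm_in(1)[OF g T] by auto
  qed (use x orb_self in auto)
  then show "orb ?r x \<subseteq> orb g x \<inter> T" unfolding orb_def by auto
next
  let ?r = "sub_perm g T"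
  have "\<forall>y\<in>T. (g ^^ n) y \<in> T \<longrightarrow> (g ^^ n) y \<in> orb ?r y" for n
  proof (induction n rule: less_induct)
    case (less n)
    show ?case
    proof (intro ballI impI)
      fix y assume y: "y \<in> T" and yn: "(g ^^ n) y \<in> T"
      show "(g ^^ n) y \<in> orb ?r y"
      proof (cases "n = 0")
        case False
        obtain k where k: "0 < k" "?r y = (g ^^ k) y" "\<And>j. 0 < j \<Longrightarrow> j < k \<Longrightarrow> (g ^^ j) y \<notin> T"
          using sub_perm_first_return[OF g T y] by blast
        have "k \<le> n" using k(3)[of n] False yn by fastforce
        then have eq: "(g ^^ n) y = (g ^^ (n - k)) (?r y)"
          using k(2) funpow_diff_apply(1)[of k n g y] by simp
        have "(g ^^ (n - k)) (?r y) \<in> orb ?r (?r y)"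
          using less[rule_format, of "n - k" "?r y"] sub_perm_in[OF g T y] k(1) False eq yn by auto
        then show ?thesis using eq orb_trans[OF orb_apply[of ?r y]] by auto
      qed (simp add: orb_self)
    qed
  qed
  then show "orb g x \<inter> T \<subseteq> orb ?r x" using x unfolding orb_def by auto
qed

lemma orbits_sub_perm:
  assumes g: "perm_on g D" and T: "T \<subseteq> D"
  shows "orbits (sub_perm g T) T = (\<lambda>Ob. Ob \<inter> T) ` {Ob \<in> orbits g D. Ob \<inter> T \<noteq> {}}"
proof (intro equalityI subsetI)
  fix Ob assume "Ob \<in> orbits (sub_perm g T) T"
  then obtain x where x: "x \<in> T" "Ob = orb (sub_perm g T) x" by (auto elim: orbitsE)
  then have "Ob = orb g x \<inter> T" "orb g x \<in> orbits g D" "orb g x \<inter> T \<noteq> {}"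
    using orb_sub_perm[OF g T] T orb_self[of x g] by (auto intro: orbitsI)
  then show "Ob \<in> (\<lambda>Ob. Ob \<inter> T) ` {Ob \<in> orbits g D. Ob \<inter> T \<noteq> {}}" by blast
next
  fix Ob assume "Ob \<in> (\<lambda>Ob. Ob \<inter> T) ` {Ob \<in> orbits g D. Ob \<inter> T \<noteq> {}}"
  then obtain x y where "x \<in> D" "Ob = orb g x \<inter> T" "y \<in> orb g x" "y \<in> T"
    by (auto elim!: orbitsE)
  then have "Ob = orb (sub_perm g T) y"
    using orb_eq[OF g \<open>x \<in> D\<close> \<open>y \<in> orb g x\<close>] orb_sub_perm[OF g T \<open>y \<in> T\<close>] by simp
  then show "Ob \<in> orbits (sub_perm g T) T" using \<open>y \<in> T\<close> by (simp add: orbitsI)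
qed

lemma sub_perm_comp:
  assumes g: "perm_on g D" and T: "T \<subseteq> D" and x: "x \<in> T"
    and t_out: "\<forall>y. y \<notin> T \<longrightarrow> t y = y" and t_in: "\<forall>y\<in>T. t y \<in> T"
  shows "sub_perm (g \<circ> t) T x = sub_perm g T (t x)"
proof -
  have tx: "t x \<in> T" using t_in x by auto
  obtain k where k: "0 < k" "(g ^^ k) (t x) \<in> T" "sub_perm g T (t x) = (g ^^ k) (t x)"
    "\<And>j. 0 < j \<Longrightarrow> j < k \<Longrightarrow> (g ^^ j) (t x) \<notin> T"
    using sub_perm_first_return[OF g T tx] by blast
  have iter: "((g \<circ> t) ^^ n) x = (g ^^ n) (t x)" if "0 < n" "n \<le> k" for n
    using that
  proof (induction n)
    case (Suc n)
    then show ?case using k(4)[of n] t_out by (cases "n = 0") auto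
  qed simp
  have "(LEAST j. 0 < j \<and> ((g \<circ> t) ^^ j) x \<in> T) = k"
  proof (rule Least_equality)
    show "0 < k \<and> ((g \<circ> t) ^^ k) x \<in> T" using iter[of k] k by auto
    show "k \<le> j" if "0 < j \<and> ((g \<circ> t) ^^ j) x \<in> T" for j
      using iter[of j] k(4)[of j] that by fastforce
  qed
  then show ?thesis using iter[of k] k unfolding sub_perm_def by simp
qed

text \<open>Removing two darts from a cycle skips at most two consecutive entries.\<close>
lemma skip_eq_sub_perm:
  assumes p: "perm_on p D" and x: "x \<in> D - {d, d'}"
  shows "skip p d d' x = sub_perm p (D - {d, d'}) x"
proof -
  let ?T = "D - {d, d'}"
  obtain k where k: "0 < k" "(p ^^ k) x \<in> ?T" "sub_perm p ?T x = (p ^^ k) x"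
    "\<And>j. 0 < j \<Longrightarrow> j < k \<Longrightarrow> (p ^^ j) x \<notin> ?T"
    using sub_perm_first_return[OF p _ x] by blast
  have xD: "x \<in> D" using x by auto
  have removed: "(p ^^ j) x \<in> {d, d'}" if "0 < j" "j < k" for j
    using k(4)[OF that] perm_on_funpow_in[OF p xD, of j] by blast
  have distinct: "(p ^^ i) x \<noteq> (p ^^ j) x" if "0 < i" "i < j" "j < k" for i j
  proof
    assume "(p ^^ i) x = (p ^^ j) x"
    then have "(p ^^ (j - i)) x = x" using perm_on_funpow_cancel[OF p xD] that by auto
    moreover have "0 < j - i" "j - i < k" using that by auto
    ultimately show False using k(4)[of "j - i"] x by auto
  qed
  have pow: "(p ^^ 1) x = p x" "(p ^^ 2) x = p (p x)" "(p ^^ 3) x = p (p (p x))"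
    by (simp_all add: numeral_3_eq_3 numeral_2_eq_2)
  have "k \<le> 3"
  proof (rule ccontr)
    assume "\<not> k \<le> 3"
    then show False
      using removed[of 1] removed[of 2] removed[of 3]
        distinct[of 1 2] distinct[of 1 3] distinct[of 2 3] by auto
  qed
  then consider "k = 1" | "k = 2" | "k = 3" using k(1) by linarith
  then show ?thesis
    using k(2,3) removed[of 1] removed[of 2] pow unfolding skip_def by cases auto
qed

lemma sub_perm_label:
  assumes g: "perm_on g D" and T: "T \<subseteq> D" and x: "x \<in> T"
    and L: "\<forall>y\<in>D - T. L (g y) = L y"
  shows "L (sub_perm g T x) = L (g x)"
proof -
  obtain k where k: "0 < k" "sub_perm g T x = (g ^^ k) x"
    "\<And>j. 0 < j \<Longrightarrow> j < k \<Longrightarrow> (g ^^ j) x \<notin> T"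
    using sub_perm_first_return[OF g T x] by blast
  have "L ((g ^^ j) x) = L (g x)" if "0 < j" "j \<le> k" for j
    using that
  proof (induction j)
    case (Suc j)
    then show ?case
      using k(3)[of j] L perm_on_funpow_in[OF g, of x j] x T by (cases "j = 0") auto
  qed simp
  then show ?thesis using k by simp
qed

definition orbit_trace :: "'d set \<Rightarrow> 'd set \<Rightarrow> 'd set \<Rightarrow> 'd set" where
  "orbit_trace T M Ob = (if Ob \<inter> T \<noteq> {} then Ob \<inter> T else Ob \<inter> M)"

lemma inj_on_orbit_trace:
  assumes g: "perm_on g D" and ne: "\<forall>Ob\<in>orbits g D. orbit_trace T M Ob \<noteq> {}"
  shows "inj_on (orbit_trace T M) (orbits g D)"
proof (rule inj_onI)
  fix Ob1 Ob2 assume Ob1: "Ob1 \<in> orbits g D" and Ob2: "Ob2 \<in> orbits g D"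
    and eq: "orbit_trace T M Ob1 = orbit_trace T M Ob2"
  obtain x1 where x1: "x1 \<in> D" "Ob1 = orb g x1" using Ob1 by (auto elim: orbitsE)
  obtain x2 where x2: "x2 \<in> D" "Ob2 = orb g x2" using Ob2 by (auto elim: orbitsE)
  have "orbit_trace T M Ob1 \<subseteq> Ob1 \<inter> Ob2"
    using eq unfolding orbit_trace_def by (auto split: if_splits)
  then have "Ob1 \<inter> Ob2 \<noteq> {}" using ne Ob1 by blast
  then show "Ob1 = Ob2" using orb_disjoint_or_eq[OF g x1(1) x2(1)] x1 x2 by simp
qed

text \<open>Outside \<open>T\<close> the labelling is invariant along \<open>g\<close>, so an orbit avoiding \<open>T\<close> carries a
  single label and an orbit meeting \<open>T\<close> shows all its labels on \<open>T\<close>.\<close>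
lemma orbit_trace_meets_label_iff:
  assumes g: "perm_on g D" and T: "T \<subseteq> D" and L: "\<forall>y\<in>D - T. L (g y) = L y"
    and Ob: "Ob \<in> orbits g D" and ne: "orbit_trace T M Ob \<noteq> {}"
  shows "(\<exists>x\<in>orbit_trace T M Ob. L x \<in> K) \<longleftrightarrow> (\<exists>x\<in>Ob. L x \<in> K)"
proof
  show "\<exists>x\<in>orbit_trace T M Ob. L x \<in> K \<Longrightarrow> \<exists>x\<in>Ob. L x \<in> K"
    unfolding orbit_trace_def by (auto split: if_splits)
next
  assume "\<exists>x\<in>Ob. L x \<in> K"
  then obtain z where z: "z \<in> Ob" "L z \<in> K" by auto
  obtain x where x: "x \<in> D" "Ob = orb g x" using Ob by (auto elim: orbitsE)
  have zD: "z \<in> D" using z x orb_subset[OF g] by auto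
  have Oz: "Ob = orb g z" using orb_eq[OF g x(1)] z x by auto
  show "\<exists>x\<in>orbit_trace T M Ob. L x \<in> K"
  proof (cases "Ob \<inter> T = {}")
    case False
    then have "\<exists>n. (g ^^ n) z \<in> T" using Oz unfolding orb_def by auto
    then obtain n where n: "(g ^^ n) z \<in> T" "L ((g ^^ n) z) = L z"
      using funpow_reaches_with_label[OF g zD _ L] by auto
    then have "(g ^^ n) z \<in> orbit_trace T M Ob"
      using False Oz orb_funpow[of n g z] unfolding orbit_trace_def by auto
    then show ?thesis using n(2) z(2) by (intro bexI[of _ "(g ^^ n) z"]) simp_all
  next
    case True
    then have "orb g z \<subseteq> D - T" using Oz orb_subset[OF g zD] by auto
    then have "\<forall>y\<in>Ob. L y = L z" using orb_label_const[OF _ L] Oz by simp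
    moreover obtain y where "y \<in> orbit_trace T M Ob" using ne by auto
    ultimately show ?thesis using z(2) unfolding orbit_trace_def by (auto split: if_splits)
  qed
qed

lemma card_orbit_trace_meets_label:
  assumes g: "perm_on g D" and T: "T \<subseteq> D" and L: "\<forall>y\<in>D - T. L (g y) = L y"
    and ne: "\<forall>Ob\<in>orbits g D. orbit_trace T M Ob \<noteq> {}"
  shows "card {Ob \<in> orbit_trace T M ` orbits g D. \<exists>x\<in>Ob. L x \<in> K}
       = card {Ob \<in> orbits g D. \<exists>x\<in>Ob. L x \<in> K}"
proof -
  have iff: "(\<exists>x\<in>orbit_trace T M Ob. L x \<in> K) \<longleftrightarrow> (\<exists>x\<in>Ob. L x \<in> K)"
    if "Ob \<in> orbits g D" for Ob
    using orbit_trace_meets_label_iff[OF g T L that] ne that by simp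
  have "{Ob \<in> orbit_trace T M ` orbits g D. \<exists>x\<in>Ob. L x \<in> K}
      = orbit_trace T M ` {Ob \<in> orbits g D. \<exists>x\<in>Ob. L x \<in> K}"
    using iff by (auto simp: image_iff)
  moreover have "inj_on (orbit_trace T M) {Ob \<in> orbits g D. \<exists>x\<in>Ob. L x \<in> K}"
    using inj_on_orbit_trace[OF g ne] by (rule inj_on_subset) auto
  ultimately show ?thesis by (simp add: card_image)
qed

lemma markers_subset: "markers p d d' \<subseteq> {d, d'}"
  unfolding markers_def by auto

lemma markers_cong: "p d = q d \<Longrightarrow> p d' = q d' \<Longrightarrow> markers p d d' = markers q d d'"
  unfolding markers_def by auto

text \<open>An orbit of \<open>g\<close> inside \<open>{d, d'}\<close> is a fixed point or the transposition of \<open>d\<close> and \<open>d'\<close>;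
  either way it contains exactly one marker.\<close>
lemma orbit_avoiding_contains_marker:
  assumes g: "perm_on g D" and dd: "d \<in> D" "d' \<in> D" "d \<noteq> d'" and x: "x \<in> D"
    and avoid: "orb g x \<inter> (D - {d, d'}) = {}"
  shows "\<exists>m. orb g x \<inter> markers g d d' = {m}"
proof -
  have sub: "orb g x \<subseteq> {d, d'}" using avoid orb_subset[OF g x] by auto
  have xd: "x \<in> {d, d'}" and gx: "g x \<in> {d, d'}"
    using sub orb_self[of x g] orb_apply[of g x] by auto
  show ?thesis
  proof (cases "g x = x")
    case True
    then show ?thesis using orb_fixpoint[of g x] xd unfolding markers_def by auto
  next
    case False
    have "g (g x) \<in> {d, d'}"
      using sub orb_trans[OF orb_apply[of g x]] orb_apply[of g "g x"] by auto
    moreover have "g (g x) \<noteq> g x"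
    proof
      assume "g (g x) = g x"
      then have "g x = x"
        using inj_onD[of g D "g x" x] g perm_on_in[OF g x] x unfolding perm_on_def by blast
      then show False using False by simp
    qed
    ultimately have "g d = d' \<and> g d' = d" using xd gx False by auto
    then show ?thesis
      using orb_swap[of g d d'] orb_swap[of g d' d] xd dd unfolding markers_def by auto
  qed
qed

lemma marker_orbit:
  assumes dd: "d \<noteq> d'" and m: "m \<in> markers g d d'"
  shows "orb g m \<inter> (D - {d, d'}) = {}" "orb g m \<inter> markers g d d' = {m}"
proof -
  have "orb g m = {m} \<or> (orb g m = {d, d'} \<and> markers g d d' = {d})"
    using m dd orb_fixpoint[of g m] orb_swap[of g d d'] unfolding markers_def
    by (auto split: if_splits)
  then show "orb g m \<inter> (D - {d, d'}) = {}" "orb g m \<inter> markers g d d' = {m}"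
    using m markers_subset[of g d d'] by auto
qed

lemma orbit_trace_remove_two_nonempty:
  assumes g: "perm_on g D" and dd: "d \<in> D" "d' \<in> D" "d \<noteq> d'" and Ob: "Ob \<in> orbits g D"
  shows "orbit_trace (D - {d, d'}) (markers g d d') Ob \<noteq> {}"
  using Ob orbit_avoiding_contains_marker[OF g dd] unfolding orbit_trace_def
  by (auto elim!: orbitsE)

lemma orbit_trace_avoiding_remove_two:
  assumes g: "perm_on g D" and dd: "d \<in> D" "d' \<in> D" "d \<noteq> d'"
  shows "orbit_trace (D - {d, d'}) (markers g d d') ` {Ob \<in> orbits g D. Ob \<inter> (D - {d, d'}) = {}}
       = (\<lambda>m. {m}) ` markers g d d'"
proof (intro equalityI subsetI)
  fix S assume "S \<in> orbit_trace (D - {d, d'}) (markers g d d') ` {Ob \<in> orbits g D. Ob \<inter> (D - {d, d'}) = {}}"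
  then obtain x where x: "x \<in> D" "orb g x \<inter> (D - {d, d'}) = {}" "S = orb g x \<inter> markers g d d'"
    unfolding orbit_trace_def by (auto elim!: orbitsE)
  then obtain m where "orb g x \<inter> markers g d d' = {m}"
    using orbit_avoiding_contains_marker[OF g dd x(1)] by auto
  moreover have "orb g x \<inter> markers g d d' \<subseteq> markers g d d'" by blast
  ultimately show "S \<in> (\<lambda>m. {m}) ` markers g d d'" using x(3) by auto
next
  fix S assume "S \<in> (\<lambda>m. {m}) ` markers g d d'"
  then obtain m where m: "m \<in> markers g d d'" "S = {m}" by auto
  then have "m \<in> D" using markers_subset[of g d d'] dd by auto
  moreover have "orb g m \<inter> (D - {d, d'}) = {}" "S = orbit_trace (D - {d, d'}) (markers g d d') (orb g m)"
    using marker_orbit[OF dd(3) m(1)] m(2) unfolding orbit_trace_def by auto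
  ultimately show "S \<in> orbit_trace (D - {d, d'}) (markers g d d') ` {Ob \<in> orbits g D. Ob \<inter> (D - {d, d'}) = {}}"
    using orbitsI[of m D g] by blast
qed

lemma orbits_remove_two:
  assumes g: "perm_on g D" and dd: "d \<in> D" "d' \<in> D" "d \<noteq> d'"
    and g'_rest: "\<forall>y\<in>D - {d, d'}. g' y = sub_perm g (D - {d, d'}) y"
    and g'_markers: "\<forall>m\<in>markers g d d'. g' m = m"
  shows "orbits g' (D - {d, d'} \<union> markers g d d')
       = orbit_trace (D - {d, d'}) (markers g d d') ` orbits g D"
proof -
  define T where "T = D - {d, d'}"
  define M where "M = markers g d d'"
  have T: "T \<subseteq> D" unfolding T_def by auto
  have "orbits g' T = orbits (sub_perm g T) T"
  proof (rule orbits_cong)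
    show "\<forall>y\<in>T. g' y = sub_perm g T y" using g'_rest unfolding T_def .
    then show "\<forall>y\<in>T. g' y \<in> T" using sub_perm_in(1)[OF g T] by simp
  qed
  also have "\<dots> = orbit_trace T M ` {Ob \<in> orbits g D. Ob \<inter> T \<noteq> {}}"
    unfolding orbits_sub_perm[OF g T] by (rule image_cong) (auto simp: orbit_trace_def)
  finally have meet: "orbits g' T = orbit_trace T M ` {Ob \<in> orbits g D. Ob \<inter> T \<noteq> {}}" .
  have "orbits g' M = (\<lambda>m. {m}) ` M"
    unfolding orbits_def M_def by (rule image_cong) (simp_all add: orb_fixpoint g'_markers)
  then have avoid: "orbits g' M = orbit_trace T M ` {Ob \<in> orbits g D. Ob \<inter> T = {}}"
    unfolding T_def M_def orbit_trace_avoiding_remove_two[OF g dd] .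
  have "orbits g' (T \<union> M) = orbits g' T \<union> orbits g' M" unfolding orbits_def by (rule image_Un)
  also have "\<dots> = orbit_trace T M ` ({Ob \<in> orbits g D. Ob \<inter> T \<noteq> {}} \<union> {Ob \<in> orbits g D. Ob \<inter> T = {}})"
    unfolding meet avoid by (rule image_Un[symmetric])
  also have "{Ob \<in> orbits g D. Ob \<inter> T \<noteq> {}} \<union> {Ob \<in> orbits g D. Ob \<inter> T = {}} = orbits g D"
    by auto
  finally show ?thesis unfolding T_def M_def .
qed

lemma card_orbits_remove_two:
  assumes g: "perm_on g D" and dd: "d \<in> D" "d' \<in> D" "d \<noteq> d'"
    and g'_rest: "\<forall>y\<in>D - {d, d'}. g' y = sub_perm g (D - {d, d'}) y"
    and g'_markers: "\<forall>m\<in>markers g d d'. g' m = m"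
    and L: "\<forall>y\<in>{d, d'}. L (g y) = L y"
  shows "card {Ob \<in> orbits g' (D - {d, d'} \<union> markers g d d'). \<exists>x\<in>Ob. L x \<in> K}
       = card {Ob \<in> orbits g D. \<exists>x\<in>Ob. L x \<in> K}"
proof -
  have "\<forall>y\<in>D - (D - {d, d'}). L (g y) = L y" using L by auto
  moreover have "\<forall>Ob\<in>orbits g D. orbit_trace (D - {d, d'}) (markers g d d') Ob \<noteq> {}"
    using orbit_trace_remove_two_nonempty[OF g dd] by blast
  ultimately show ?thesis
    unfolding orbits_remove_two[OF g dd g'_rest g'_markers]
    by (intro card_orbit_trace_meets_label[OF g]) auto
qed

text \<open>No label is lost, since every orbit leaves a trace on the remaining darts.\<close>
lemma image_remove_two:
  assumes g: "perm_on g D" and dd: "d \<in> D" "d' \<in> D" "d \<noteq> d'"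
    and L: "\<forall>y\<in>{d, d'}. L (g y) = L y"
  shows "L ` (D - {d, d'} \<union> markers g d d') = L ` D"
proof
  show "L ` (D - {d, d'} \<union> markers g d d') \<subseteq> L ` D"
    using markers_subset[of g d d'] dd by auto
next
  show "L ` D \<subseteq> L ` (D - {d, d'} \<union> markers g d d')"
  proof
    fix l assume "l \<in> L ` D"
    then obtain z where z: "z \<in> D" "l = L z" by auto
    let ?tr = "orbit_trace (D - {d, d'}) (markers g d d') (orb g z)"
    have "(\<exists>x\<in>?tr. L x \<in> {L z}) \<longleftrightarrow> (\<exists>x\<in>orb g z. L x \<in> {L z})"
      by (rule orbit_trace_meets_label_iff[OF g _ _ orbitsI[OF z(1)]
            orbit_trace_remove_two_nonempty[OF g dd orbitsI[OF z(1)]]]) (use L in auto)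
    then obtain x where "x \<in> ?tr" "L x = L z" using orb_self[of z g] by auto
    moreover have "?tr \<subseteq> D - {d, d'} \<union> markers g d d'"
      unfolding orbit_trace_def by auto
    ultimately show "l \<in> L ` (D - {d, d'} \<union> markers g d d')"
      using z(2) image_eqI[of l L x] by auto
  qed
qed

section \<open>Boundary components of spanning ribbon subgraphs\<close>

abbreviation dart_pairs :: "('d \<Rightarrow> 'd) \<Rightarrow> 'd set \<Rightarrow> 'd set set" where
  "dart_pairs a D \<equiv> {{x, a x} | x. x \<in> D}"

text \<open>The edge involution of the spanning ribbon subgraph whose darts are \<open>S\<close>.\<close>
definition restrict_alp :: "('d \<Rightarrow> 'd) \<Rightarrow> 'd set \<Rightarrow> 'd \<Rightarrow> 'd" where
  "restrict_alp a S x = (if x \<in> S then a x else x)"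

lemma dart_pairs_Union_subset:
  "involution_on a D \<Longrightarrow> A \<subseteq> dart_pairs a D \<Longrightarrow> \<Union>A \<subseteq> D"
  by blast

lemma dart_pairs_Union_closed:
  assumes a: "involution_on a D" and A: "A \<subseteq> dart_pairs a D" and x: "x \<in> \<Union>A"
  shows "a x \<in> \<Union>A"
proof -
  obtain y where y: "y \<in> D" "x \<in> {y, a y}" "{y, a y} \<in> A" using A x by blast
  then have "a x \<in> {y, a y}" using a by auto
  then show ?thesis using y(3) by blast
qed

lemma finite_dart_pairs: "finite D \<Longrightarrow> A \<subseteq> dart_pairs a D \<Longrightarrow> finite A"
  by (rule finite_subset[of _ "(\<lambda>x. {x, a x}) ` D"]) blast+

lemma involution_on_restrict_alp:
  assumes a: "involution_on a D" and A: "A \<subseteq> dart_pairs a D"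
  shows "involution_on (restrict_alp a (\<Union>A)) D"
  using a dart_pairs_Union_closed[OF a A] unfolding restrict_alp_def by auto

lemma perm_on_restrict_alp:
  assumes s: "perm_on s D" and a: "involution_on a D" and A: "A \<subseteq> dart_pairs a D"
  shows "perm_on (s \<circ> restrict_alp a (\<Union>A)) D"
proof -
  have "finite D" using s unfolding perm_on_def by simp
  then show ?thesis
    using perm_on_comp[OF s perm_on_involution] involution_on_restrict_alp[OF a A] by blast
qed

lemma orbits_avoiding_cong:
  assumes g_out: "\<forall>y. y \<notin> S \<longrightarrow> g y = s y"
  shows "{orb s x | x. x \<in> D \<and> orb s x \<inter> S = {}} = {Ob \<in> orbits g D. Ob \<inter> S = {}}"
proof -
  have same_orb: "orb g x = orb s x" if "orb g x \<inter> S = {} \<or> orb s x \<inter> S = {}" for x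
  proof (cases "orb g x \<inter> S = {}")
    case True
    then have "\<forall>y\<in>orb g x. s y = g y" using g_out by (auto simp: disjoint_iff)
    then show ?thesis using orb_cong_orb[of g x s] by simp
  next
    case False
    then have "\<forall>y\<in>orb s x. g y = s y" using that g_out by (auto simp: disjoint_iff)
    then show ?thesis using orb_cong_orb[of s x g] by simp
  qed
  show ?thesis
  proof (intro equalityI subsetI)
    fix Ob assume "Ob \<in> {orb s x | x. x \<in> D \<and> orb s x \<inter> S = {}}"
    then obtain x where "x \<in> D" "orb s x \<inter> S = {}" "Ob = orb s x" by blast
    then show "Ob \<in> {Ob \<in> orbits g D. Ob \<inter> S = {}}"
      using same_orb[of x] orbitsI[of x D g] by auto
  next
    fix Ob assume "Ob \<in> {Ob \<in> orbits g D. Ob \<inter> S = {}}"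
    then obtain x where "x \<in> D" "orb g x \<inter> S = {}" "Ob = orb g x" by (auto elim: orbitsE)
    then show "Ob \<in> {orb s x | x. x \<in> D \<and> orb s x \<inter> S = {}}"
      using same_orb[of x] by auto
  qed
qed

text \<open>A boundary component of the spanning subgraph either meets its darts \<open>\<Union>A\<close>, and is then
  the trace there of an orbit of \<open>s \<circ> restrict_alp a (\<Union>A)\<close>, or is an isolated vertex, which is
  an orbit of that permutation avoiding \<open>\<Union>A\<close>.\<close>
lemma sub_faces_eq_orbit_trace:
  assumes s: "perm_on s D" and a: "involution_on a D" and A: "A \<subseteq> dart_pairs a D"
  shows "sub_faces D s a A = orbit_trace (\<Union>A) UNIV ` orbits (s \<circ> restrict_alp a (\<Union>A)) D"
proof -
  define S where "S = \<Union>A"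
  define g where "g = s \<circ> restrict_alp a S"
  have SD: "S \<subseteq> D" using dart_pairs_Union_subset[OF a A] unfolding S_def .
  have Sa: "\<forall>x\<in>S. a x \<in> S" using dart_pairs_Union_closed[OF a A] unfolding S_def by blast
  have g: "perm_on g D" using perm_on_restrict_alp[OF s a A] unfolding g_def S_def .
  have g_out: "g y = s y" if "y \<notin> S" for y using that unfolding g_def restrict_alp_def by simp
  have "orbits (sub_perm s S \<circ> a) S = orbits (sub_perm g S) S"
  proof (rule orbits_cong)
    show "\<forall>y\<in>S. (sub_perm s S \<circ> a) y = sub_perm g S y"
      using sub_perm_comp[OF s SD, of _ "restrict_alp a S"] Sa
      unfolding g_def by (simp add: restrict_alp_def)
    then show "\<forall>y\<in>S. (sub_perm s S \<circ> a) y \<in> S" using sub_perm_in(1)[OF g SD] by simp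
  qed
  also have "\<dots> = orbit_trace S UNIV ` {Ob \<in> orbits g D. Ob \<inter> S \<noteq> {}}"
    unfolding orbits_sub_perm[OF g SD] by (rule image_cong) (auto simp: orbit_trace_def)
  finally have meet: "orbits (sub_perm s S \<circ> a) S = \<dots>" .
  have "{orb s x | x. x \<in> D \<and> orb s x \<inter> S = {}} = {Ob \<in> orbits g D. Ob \<inter> S = {}}"
    by (rule orbits_avoiding_cong) (use g_out in auto)
  also have "\<dots> = orbit_trace S UNIV ` {Ob \<in> orbits g D. Ob \<inter> S = {}}"
    by (auto simp: orbit_trace_def image_iff)
  finally have avoid: "{orb s x | x. x \<in> D \<and> orb s x \<inter> S = {}} = \<dots>" .
  have "sub_faces D s a A
      = orbit_trace S UNIV ` ({Ob \<in> orbits g D. Ob \<inter> S \<noteq> {}} \<union> {Ob \<in> orbits g D. Ob \<inter> S = {}})"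
    unfolding sub_faces_def Let_def S_def[symmetric] meet avoid image_Un ..
  also have "{Ob \<in> orbits g D. Ob \<inter> S \<noteq> {}} \<union> {Ob \<in> orbits g D. Ob \<inter> S = {}} = orbits g D"
    by auto
  finally show ?thesis unfolding S_def g_def .
qed

lemma sub_faces_subset:
  assumes s: "perm_on s D" and a: "involution_on a D" and A: "A \<subseteq> dart_pairs a D"
    and Fc: "Fc \<in> sub_faces D s a A"
  shows "Fc \<subseteq> D"
  using Fc orb_subset[OF perm_on_restrict_alp[OF s a A]]
  unfolding sub_faces_eq_orbit_trace[OF s a A] orbit_trace_def by (auto elim!: orbitsE)

lemma card_sub_faces_meets_label:
  assumes s: "perm_on s D" and a: "involution_on a D" and A: "A \<subseteq> dart_pairs a D"
    and L: "\<forall>x\<in>D. L (s x) = L x"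
  shows "card {Fc \<in> sub_faces D s a A. \<exists>x\<in>Fc. L x \<in> K}
       = card {Ob \<in> orbits (s \<circ> restrict_alp a (\<Union>A)) D. \<exists>x\<in>Ob. L x \<in> K}"
proof -
  have "\<forall>y\<in>D - \<Union>A. L ((s \<circ> restrict_alp a (\<Union>A)) y) = L y"
    using L unfolding restrict_alp_def by simp
  moreover have "\<forall>Ob\<in>orbits (s \<circ> restrict_alp a (\<Union>A)) D. orbit_trace (\<Union>A) UNIV Ob \<noteq> {}"
    using orb_self[of _ "s \<circ> restrict_alp a (\<Union>A)"] by (auto simp: orbit_trace_def orbits_def)
  ultimately show ?thesis
    unfolding sub_faces_eq_orbit_trace[OF s a A]
    using card_orbit_trace_meets_label[OF perm_on_restrict_alp[OF s a A]
        dart_pairs_Union_subset[OF a A]] by blast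
qed

lemma perm_on_union_fixed:
  assumes r: "perm_on r D0" and disj: "D0 \<inter> M = {}" and fin: "finite M"
    and g_rest: "\<forall>y\<in>D0. g y = r y" and g_fixed: "\<forall>m\<in>M. g m = m"
  shows "perm_on g (D0 \<union> M)"
proof -
  have r_in: "\<forall>y\<in>D0. r y \<in> D0" and r_inj: "inj_on r D0"
    using r unfolding perm_on_def by auto
  have "inj_on g (D0 \<union> M)"
  proof (rule inj_onI)
    fix x y assume "x \<in> D0 \<union> M" "y \<in> D0 \<union> M" "g x = g y"
    then show "x = y"
      using g_rest g_fixed r_in disj inj_onD[OF r_inj, of x y] by auto
  qed
  then show ?thesis using r fin g_rest g_fixed r_in unfolding perm_on_def by auto
qed

lemma card_sub_faces_remove_two:
  fixes s s' a a' :: "'d \<Rightarrow> 'd" and A A' :: "'d set set"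
  defines "g \<equiv> s \<circ> restrict_alp a (\<Union>A)" and "g' \<equiv> s' \<circ> restrict_alp a' (\<Union>A')"
  assumes s: "perm_on s D" and a: "involution_on a D" and A: "A \<subseteq> dart_pairs a D"
    and L: "\<forall>x\<in>D. L (s x) = L x"
    and dd: "d \<in> D" "d' \<in> D" "d \<noteq> d'"
    and D': "D' = D - {d, d'} \<union> markers g d d'"
    and a': "involution_on a' D'" and A': "A' \<subseteq> dart_pairs a' D'"
    and L': "\<forall>x\<in>D'. L (s' x) = L x"
    and g'_rest: "\<forall>y\<in>D - {d, d'}. g' y = sub_perm g (D - {d, d'}) y"
    and g'_markers: "\<forall>m\<in>markers g d d'. g' m = m"
    and L_removed: "\<forall>y\<in>{d, d'}. L (g y) = L y"
  shows "card {Fc \<in> sub_faces D' s' a' A'. \<exists>x\<in>Fc. L x \<in> K}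
       = card {Fc \<in> sub_faces D s a A. \<exists>x\<in>Fc. L x \<in> K}"
proof -
  have g: "perm_on g D" unfolding g_def by (rule perm_on_restrict_alp[OF s a A])
  have "perm_on (sub_perm g (D - {d, d'})) (D - {d, d'})" by (rule perm_on_sub_perm[OF g]) auto
  then have g': "perm_on g' D'"
    unfolding D' using markers_subset[of g d d'] g'_rest g'_markers
    by (intro perm_on_union_fixed) (auto intro: finite_subset)
  have "\<forall>x\<in>D'. (g' \<circ> restrict_alp a' (\<Union>A')) x = s' x"
    using involution_on_restrict_alp[OF a' A'] unfolding g'_def by simp
  moreover have "perm_on (g' \<circ> restrict_alp a' (\<Union>A')) D'"
    using perm_on_comp[OF g' perm_on_involution] involution_on_restrict_alp[OF a' A'] g'
    unfolding perm_on_def by blast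
  ultimately have s': "perm_on s' D'" using perm_on_cong by blast
  have "card {Fc \<in> sub_faces D' s' a' A'. \<exists>x\<in>Fc. L x \<in> K} = card {Ob \<in> orbits g' D'. \<exists>x\<in>Ob. L x \<in> K}"
    unfolding g'_def by (rule card_sub_faces_meets_label[OF s' a' A' L'])
  also have "\<dots> = card {Ob \<in> orbits g D. \<exists>x\<in>Ob. L x \<in> K}"
    unfolding D' by (rule card_orbits_remove_two[OF g dd g'_rest g'_markers L_removed])
  also have "\<dots> = card {Fc \<in> sub_faces D s a A. \<exists>x\<in>Fc. L x \<in> K}"
    unfolding g_def by (rule card_sub_faces_meets_label[OF s a A L, symmetric])
  finally show ?thesis .
qed

section \<open>Connected components of the packaged graph\<close>

definition component_of :: "'b set \<Rightarrow> ('b \<times> 'b) set \<Rightarrow> 'b \<Rightarrow> 'b set" where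
  "component_of B E b = {b' \<in> B. (b, b') \<in> E\<^sup>*}"

definition sym_pairs :: "('e \<Rightarrow> 'b) \<Rightarrow> ('e \<Rightarrow> 'b) \<Rightarrow> 'e set \<Rightarrow> ('b \<times> 'b) set" where
  "sym_pairs u v X = (\<lambda>x. (u x, v x)) ` X \<union> (\<lambda>x. (v x, u x)) ` X"

lemma sym_sym_pairs: "sym (sym_pairs u v X)"
  unfolding sym_pairs_def sym_def by auto

lemma sym_pairs_insert: "sym_pairs u v (insert x X) = sym_pairs u v X \<union> {(u x, v x), (v x, u x)}"
  unfolding sym_pairs_def by auto

lemma sym_pairs_cong:
  "\<forall>x\<in>X. u x = u' x \<and> v x = v' x \<Longrightarrow> sym_pairs u v X = sym_pairs u' v' X"
  unfolding sym_pairs_def by (metis (no_types, lifting) image_cong)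

lemma comp_eq_component_of:
  "comp D a lab A = component_of (blocks D lab) (sym_pairs lab (lab \<circ> a) (\<Union>A))"
proof
  fix b
  have "{(lab x, lab (a x)) | x. x \<in> \<Union>A} = (\<lambda>x. (lab x, lab (a x))) ` \<Union>A"
    "{(lab x, lab (a x)) | x. x \<in> \<Union>A}\<inverse> = (\<lambda>x. (lab (a x), lab x)) ` \<Union>A" by blast+
  then show "comp D a lab A b = component_of (blocks D lab) (sym_pairs lab (lab \<circ> a) (\<Union>A)) b"
    unfolding comp_def component_of_def sym_pairs_def Let_def by simp
qed

lemma comps_eq_component_of:
  "comps D a lab A = component_of (blocks D lab) (sym_pairs lab (lab \<circ> a) (\<Union>A)) ` blocks D lab"
  unfolding comps_def comp_eq_component_of ..

lemma component_of_self: "b \<in> B \<Longrightarrow> b \<in> component_of B E b"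
  unfolding component_of_def by auto

lemma component_of_eq:
  assumes "sym E" "c \<in> component_of B E b"
  shows "component_of B E c = component_of B E b"
proof -
  have bc: "(b, c) \<in> E\<^sup>*" using assms(2) unfolding component_of_def by auto
  then have "(c, b) \<in> E\<^sup>*" using symD[OF sym_rtrancl[OF assms(1)]] by blast
  then show ?thesis using bc rtrancl_trans[of _ _ E] unfolding component_of_def by blast
qed

lemma component_of_rep:
  "sym E \<Longrightarrow> K \<in> component_of B E ` B \<Longrightarrow> r \<in> K \<Longrightarrow> K = component_of B E r"
  using component_of_eq by fastforce

lemma component_of_empty: "b \<in> B \<Longrightarrow> component_of B {} b = {b}"
  unfolding component_of_def by auto

lemma rtrancl_insert_sym_pair:
  assumes "(b, c) \<in> (E \<union> {(p, q), (q, p)})\<^sup>*"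
  shows "(b, c) \<in> E\<^sup>* \<or> ((b, p) \<in> E\<^sup>* \<and> (q, c) \<in> E\<^sup>*) \<or> ((b, q) \<in> E\<^sup>* \<and> (p, c) \<in> E\<^sup>*)"
  using assms
proof (induction rule: rtrancl_induct)
  case (step y z)
  then show ?case by (cases "(y, z) \<in> E") (auto intro: rtrancl_into_rtrancl)
qed simp

lemma some_in_component_of:
  assumes "K \<in> component_of B E ` B"
  shows "(SOME r. r \<in> K) \<in> K" "K \<subseteq> B"
proof -
  obtain b where "b \<in> B" "K = component_of B E b" using assms by auto
  then show "(SOME r. r \<in> K) \<in> K" "K \<subseteq> B"
    using component_of_self[of b B E] someI[of "\<lambda>r. r \<in> K" b] unfolding component_of_def by auto
qed

text \<open>Adding the edge \<open>{p, q}\<close> merges at most the component of \<open>q\<close> into another one, so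
  choosing a representative is injective on the other components.\<close>
lemma inj_on_component_of_insert:
  fixes E :: "('b \<times> 'b) set" and p q :: 'b
  assumes sE: "sym E" and q: "q \<in> B"
  defines "E' \<equiv> E \<union> {(p, q), (q, p)}"
  shows "inj_on (\<lambda>K. component_of B E' (SOME r. r \<in> K))
           (component_of B E ` B - {component_of B E q})"
proof (rule inj_onI)
  fix K1 K2
  assume K1: "K1 \<in> component_of B E ` B - {component_of B E q}"
    and K2: "K2 \<in> component_of B E ` B - {component_of B E q}"
    and eq: "component_of B E' (SOME r. r \<in> K1) = component_of B E' (SOME r. r \<in> K2)"
  define r1 where "r1 = (SOME r. r \<in> K1)"
  define r2 where "r2 = (SOME r. r \<in> K2)"
  have K1C: "K1 \<in> component_of B E ` B" and K2C: "K2 \<in> component_of B E ` B"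
    using K1 K2 by blast+
  have r1: "r1 \<in> K1" "r1 \<in> B" and r2: "r2 \<in> K2" "r2 \<in> B"
    using some_in_component_of[OF K1C] some_in_component_of[OF K2C]
    unfolding r1_def r2_def by blast+
  have K1r: "K1 = component_of B E r1"
    by (rule component_of_rep[OF sE K1C r1(1)])
  have K2r: "K2 = component_of B E r2"
    by (rule component_of_rep[OF sE K2C r2(1)])
  have "r2 \<in> component_of B E' r1"
    using eq component_of_self[OF r2(2), of E'] unfolding r1_def r2_def by simp
  then have "(r1, r2) \<in> E\<^sup>* \<or> ((r1, p) \<in> E\<^sup>* \<and> (q, r2) \<in> E\<^sup>*) \<or> ((r1, q) \<in> E\<^sup>* \<and> (p, r2) \<in> E\<^sup>*)"
    by (intro rtrancl_insert_sym_pair) (simp add: component_of_def E'_def)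
  moreover have "(q, r1) \<notin> E\<^sup>*" "(q, r2) \<notin> E\<^sup>*"
    using component_of_eq[OF sE, of r1 B q] component_of_eq[OF sE, of r2 B q] K1r K2r K1 K2
      r1(2) r2(2) unfolding component_of_def by auto
  moreover have "(r1, q) \<notin> E\<^sup>*"
    using calculation(2) symD[OF sym_rtrancl[OF sE], of r1 q] by blast
  ultimately have "r2 \<in> component_of B E r1" using r2(2) unfolding component_of_def by blast
  then show "K1 = K2" using K1r K2r component_of_eq[OF sE, of r2 B r1] by simp
qed

lemma card_components_insert:
  assumes fin: "finite B" and sE: "sym E" and q: "q \<in> B"
  shows "card (component_of B E ` B) \<le> card (component_of B (E \<union> {(p, q), (q, p)}) ` B) + 1"
proof -
  define C where "C = component_of B E ` B"
  define C' where "C' = component_of B (E \<union> {(p, q), (q, p)}) ` B"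
  define Kq where "Kq = component_of B E q"
  define f where "f = (\<lambda>K. component_of B (E \<union> {(p, q), (q, p)}) (SOME r. r \<in> K))"
  have "f ` (C - {Kq}) \<subseteq> C'"
  proof
    fix K' assume "K' \<in> f ` (C - {Kq})"
    then obtain K where "K \<in> C" "K' = f K" by auto
    then show "K' \<in> C'"
      using some_in_component_of[of K B E] unfolding f_def C_def C'_def by auto
  qed
  then have "card (C - {Kq}) \<le> card C'"
    using card_inj_on_le[OF inj_on_component_of_insert[OF sE q, of p]] fin
    unfolding f_def C_def C'_def Kq_def by simp
  moreover have "card C \<le> card (C - {Kq}) + 1"
  proof (cases "Kq \<in> C")
    case True
    have "finite C" using fin unfolding C_def by simp
    then show ?thesis using card.remove[OF _ True] by simp
  qed simp
  ultimately show ?thesis unfolding C_def C'_def by simp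
qed

lemma card_le_card_edges_plus_components:
  assumes fin: "finite B" and finX: "finite X" and uv: "\<forall>x\<in>X. u x \<in> B \<and> v x \<in> B"
  shows "card B \<le> card X + card (component_of B (sym_pairs u v X) ` B)"
  using finX uv
proof (induction X rule: finite_induct)
  case empty
  have "component_of B (sym_pairs u v {}) ` B = (\<lambda>b. {b}) ` B"
    unfolding sym_pairs_def by (rule image_cong) (auto simp: component_of_empty)
  then show ?case by (simp add: card_image)
next
  case (insert x X)
  have "card (component_of B (sym_pairs u v X) ` B)
      \<le> card (component_of B (sym_pairs u v (insert x X)) ` B) + 1"
    unfolding sym_pairs_insert
    using card_components_insert[OF fin sym_sym_pairs] insert.prems by auto
  then show ?case using insert by simp
qed

lemma card_blocks_le_edges_plus_comps:
  assumes fin: "finite D" and a: "involution_on a D" and A: "A \<subseteq> dart_pairs a D"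
  shows "card (blocks D lab) \<le> card A + card (comps D a lab A)"
proof -
  define u where "u = (\<lambda>ed. lab (SOME x. x \<in> ed))"
  define v where "v = (\<lambda>ed. lab (a (SOME x. x \<in> ed)))"
  have some: "(SOME x. x \<in> ed) \<in> ed" if ed: "ed \<in> A" for ed
  proof -
    obtain y where "ed = {y, a y}" using ed A by blast
    then show ?thesis using someI[of "\<lambda>x. x \<in> ed" y] by simp
  qed
  have uv: "\<forall>ed\<in>A. u ed \<in> blocks D lab \<and> v ed \<in> blocks D lab"
    using some A a unfolding u_def v_def blocks_def by fastforce
  have "sym_pairs lab (lab \<circ> a) (\<Union>A) = sym_pairs u v A"
  proof (intro equalityI subsetI)
    fix pr assume "pr \<in> sym_pairs lab (lab \<circ> a) (\<Union>A)"
    then obtain x ed where x: "ed \<in> A" "x \<in> ed" "pr = (lab x, lab (a x)) \<or> pr = (lab (a x), lab x)"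
      unfolding sym_pairs_def by auto
    obtain y where y: "y \<in> D" "ed = {y, a y}" using x(1) A by blast
    have "a (a y) = y" using a y(1) by blast
    then have "(lab x, lab (a x)) = (u ed, v ed) \<or> (lab x, lab (a x)) = (v ed, u ed)"
      using some[OF x(1)] x(2) y(2) unfolding u_def v_def by auto
    then show "pr \<in> sym_pairs u v A" using x(1,3) unfolding sym_pairs_def by auto
  next
    fix pr assume "pr \<in> sym_pairs u v A"
    then show "pr \<in> sym_pairs lab (lab \<circ> a) (\<Union>A)"
      unfolding sym_pairs_def u_def v_def using some by auto
  qed
  then show ?thesis
    using card_le_card_edges_plus_components[OF _ finite_dart_pairs[OF fin A] uv] fin
    unfolding comps_eq_component_of blocks_def by simp
qed

definition merge :: "'b \<Rightarrow> 'b \<Rightarrow> 'b \<Rightarrow> 'b" where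
  "merge b1 b2 b = (if b = b2 then b1 else b)"

definition merged_weight :: "('b \<Rightarrow> nat) \<Rightarrow> 'b \<Rightarrow> 'b \<Rightarrow> 'b \<Rightarrow> nat" where
  "merged_weight w b1 b2 = (if b1 = b2 then w(b1 := w b1 + 1) else w(b1 := w b1 + w b2))"

lemma merge_same [simp]: "merge b b = id"
  unfolding merge_def by auto

lemma rtrancl_if_merge_eq:
  assumes "(b1, b2) \<in> E" "sym E" "merge b1 b2 u = merge b1 b2 w"
  shows "(u, w) \<in> E\<^sup>*"
proof -
  have "(b1, b2) \<in> E\<^sup>*" "(b2, b1) \<in> E\<^sup>*" using assms(1,2) unfolding sym_def by auto
  then show ?thesis using assms(3) unfolding merge_def by (auto split: if_splits)
qed

context
  fixes lab :: "'d \<Rightarrow> 'b" and a :: "'d \<Rightarrow> 'd" and S :: "'d set" and d :: 'd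
    and E E' :: "('b \<times> 'b) set" and m :: "'b \<Rightarrow> 'b"
  assumes E: "E = sym_pairs lab (lab \<circ> a) S"
    and E': "E' = sym_pairs (m \<circ> lab) (m \<circ> lab \<circ> a) (S - {d, a d})"
    and m: "m = merge (lab d) (lab (a d))"
begin

lemma rtrancl_merge:
  assumes aa: "a (a d) = d" and uv: "(u, v) \<in> E\<^sup>*"
  shows "(m u, m v) \<in> E'\<^sup>*"
  using uv
proof (induction rule: rtrancl_induct)
  case (step y z)
  from step.hyps(2) obtain x where x: "x \<in> S" "(y, z) = (lab x, lab (a x)) \<or> (y, z) = (lab (a x), lab x)"
    unfolding E sym_pairs_def by auto
  show ?case
  proof (cases "x \<in> {d, a d}")
    case True
    then have "m y = m z" using x aa unfolding m merge_def by auto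
    then show ?thesis using step.IH by simp
  next
    case False
    then have "(m y, m z) \<in> E'" using x unfolding E' sym_pairs_def by auto
    then show ?thesis using step.IH by (rule rtrancl_into_rtrancl[rotated])
  qed
qed simp

lemma rtrancl_merge_lift:
  assumes dS: "d \<in> S" and pq: "(p, q) \<in> E'\<^sup>*"
  shows "m u = p \<Longrightarrow> \<exists>v. m v = q \<and> (u, v) \<in> E\<^sup>*"
  using pq
proof (induction rule: rtrancl_induct)
  case (step y z)
  obtain v where v: "m v = y" "(u, v) \<in> E\<^sup>*" using step.IH step.prems by auto
  from step.hyps(2) obtain x where x: "x \<in> S"
    "(y, z) = (m (lab x), m (lab (a x))) \<or> (y, z) = (m (lab (a x)), m (lab x))"
    unfolding E' sym_pairs_def by auto
  have dE: "(lab d, lab (a d)) \<in> E" using dS unfolding E sym_pairs_def by auto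
  have sE: "sym E" unfolding E by (rule sym_sym_pairs)
  have edge: "(lab x, lab (a x)) \<in> E" "(lab (a x), lab x) \<in> E"
    using x(1) unfolding E sym_pairs_def by auto
  show ?case
  proof (cases "(y, z) = (m (lab x), m (lab (a x)))")
    case True
    then have "(v, lab x) \<in> E\<^sup>*" using rtrancl_if_merge_eq[OF dE sE] v(1) unfolding m by auto
    then have "(u, lab (a x)) \<in> E\<^sup>*" using v(2) edge(1) by (meson rtrancl_into_rtrancl rtrancl_trans)
    then show ?thesis using True by auto
  next
    case False
    then have yz: "(y, z) = (m (lab (a x)), m (lab x))" using x(2) by auto
    then have "(v, lab (a x)) \<in> E\<^sup>*" using rtrancl_if_merge_eq[OF dE sE] v(1) unfolding m by auto
    then have "(u, lab x) \<in> E\<^sup>*" using v(2) edge(2) by (meson rtrancl_into_rtrancl rtrancl_trans)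
    then show ?thesis using yz by auto
  qed
qed auto

lemma component_of_merge:
  assumes dS: "d \<in> S" and aa: "a (a d) = d" and b: "b \<in> B"
  shows "component_of (m ` B) E' (m b) = m ` component_of B E b"
proof (intro equalityI subsetI)
  have dE: "(lab d, lab (a d)) \<in> E" using dS unfolding E sym_pairs_def by auto
  have sE: "sym E" unfolding E by (rule sym_sym_pairs)
  fix q assume "q \<in> component_of (m ` B) E' (m b)"
  then obtain w where w: "w \<in> B" "q = m w" "(m b, q) \<in> E'\<^sup>*"
    unfolding component_of_def by auto
  obtain v where v: "m v = q" "(b, v) \<in> E\<^sup>*" using rtrancl_merge_lift[OF dS w(3)] by auto
  have "(v, w) \<in> E\<^sup>*" using rtrancl_if_merge_eq[OF dE sE] v(1) w(2) unfolding m by auto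
  then have "(b, w) \<in> E\<^sup>*" using v(2) by (rule rtrancl_trans[rotated])
  then show "q \<in> m ` component_of B E b" using w unfolding component_of_def by auto
next
  fix q assume "q \<in> m ` component_of B E b"
  then obtain c where c: "c \<in> B" "(b, c) \<in> E\<^sup>*" "q = m c" unfolding component_of_def by auto
  then show "q \<in> component_of (m ` B) E' (m b)"
    using rtrancl_merge[OF aa c(2)] unfolding component_of_def by auto
qed

end

lemma card_merge_image:
  assumes "finite K" "b1 \<in> K \<longleftrightarrow> b2 \<in> K"
  shows "card (merge b1 b2 ` K) = card K - (if b1 \<noteq> b2 \<and> b1 \<in> K then 1 else 0)"
proof (cases "b1 \<noteq> b2 \<and> b1 \<in> K")
  case True
  then have "merge b1 b2 ` K = K - {b2}"
    using assms(2) unfolding merge_def by (auto simp: image_iff split: if_splits)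
  then show ?thesis using True assms by simp
next
  case False
  then have "merge b1 b2 ` K = K"
    using assms(2) unfolding merge_def by (force simp: image_iff)
  then show ?thesis using False by auto
qed

lemma sum_merged_weight:
  assumes "finite K" "b1 \<in> K \<longleftrightarrow> b2 \<in> K"
  shows "(\<Sum>b\<in>merge b1 b2 ` K. merged_weight w b1 b2 b) = (\<Sum>b\<in>K. w b) + (if b1 = b2 \<and> b1 \<in> K then 1 else 0)"
proof (cases "b1 \<in> K")
  case True
  show ?thesis
  proof (cases "b1 = b2")
    case True
    then show ?thesis using \<open>b1 \<in> K\<close> assms(1)
      unfolding merged_weight_def by (simp add: sum.remove[OF assms(1) \<open>b1 \<in> K\<close>])
  next
    case False
    have b2: "b2 \<in> K" using True assms(2) by simp
    have img: "merge b1 b2 ` K = K - {b2}"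
      using True False b2 unfolding merge_def by (auto simp: image_iff split: if_splits)
    have "(\<Sum>b\<in>K - {b2}. merged_weight w b1 b2 b) = w b1 + w b2 + (\<Sum>b\<in>K - {b2} - {b1}. w b)"
      using assms(1) True False unfolding merged_weight_def
      by (simp add: sum.remove[of "K - {b2}" b1])
    also have "\<dots> = (\<Sum>b\<in>K. w b)"
      using assms(1) True False b2 sum.remove[OF assms(1) b2, of w]
        sum.remove[of "K - {b2}" b1 w] by simp
    finally show ?thesis using img False by simp
  qed
next
  case False
  then have "merge b1 b2 ` K = K"
    using assms(2) unfolding merge_def by (force simp: image_iff)
  moreover have "\<forall>b\<in>K. merged_weight w b1 b2 b = w b"
    using False unfolding merged_weight_def by auto
  ultimately show ?thesis using False by simp
qed

lemma merge_mem_component_iff: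
  assumes sE: "sym E" and e: "(b1, b2) \<in> E" and K: "K \<in> component_of B E ` B" and v: "v \<in> B"
  shows "merge b1 b2 v \<in> merge b1 b2 ` K \<longleftrightarrow> v \<in> K"
proof
  assume "merge b1 b2 v \<in> merge b1 b2 ` K"
  then obtain k where k: "k \<in> K" "merge b1 b2 k = merge b1 b2 v" by auto
  have "(k, v) \<in> E\<^sup>*" by (rule rtrancl_if_merge_eq[OF e sE k(2)])
  then show "v \<in> K" using component_of_rep[OF sE K k(1)] v unfolding component_of_def by auto
qed auto

lemma merge_ends_in_component:
  assumes sE: "sym E" and e: "(b1, b2) \<in> E" and K: "K \<in> component_of B E ` B"
    and b: "b1 \<in> B" "b2 \<in> B"
  shows "b1 \<in> K \<longleftrightarrow> b2 \<in> K"
  using merge_mem_component_iff[OF sE e K b(1)] merge_mem_component_iff[OF sE e K b(2)]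
  unfolding merge_def by simp

lemma inj_on_image_merge:
  assumes sE: "sym E" and e: "(b1, b2) \<in> E"
  shows "inj_on (image (merge b1 b2)) (component_of B E ` B)"
proof (rule inj_onI)
  fix K1 K2 assume K1: "K1 \<in> component_of B E ` B" and K2: "K2 \<in> component_of B E ` B"
    and eq: "merge b1 b2 ` K1 = merge b1 b2 ` K2"
  obtain r where r: "r \<in> K1" "r \<in> B" using some_in_component_of[OF K1] by blast
  then have "r \<in> K2" using eq merge_mem_component_iff[OF sE e K2 r(2)] by blast
  then show "K1 = K2" using component_of_rep[OF sE K1 r(1)] component_of_rep[OF sE K2] by simp
qed

section \<open>Removing an edge from a map\<close>

lemma dart_pairs_disjoint:
  assumes a: "involution_on a D" and y: "y \<in> D" and d: "d \<in> D" and ne: "{y, a y} \<noteq> {d, a d}"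
  shows "{y, a y} \<inter> {d, a d} = {}"
proof (rule ccontr)
  assume "{y, a y} \<inter> {d, a d} \<noteq> {}"
  then consider "y = d" | "y = a d" | "a y = d" | "a y = a d" by auto
  then show False
    using ne a y d by cases (metis insert_commute)+
qed

lemma Union_dart_pairs_avoid:
  assumes a: "involution_on a D" and A: "A \<subseteq> dart_pairs a D" and d: "d \<in> D"
  shows "\<Union>(A - {{d, a d}}) \<inter> {d, a d} = {}"
  using dart_pairs_disjoint[OF a _ d] A by blast

locale edge_removal =
  fixes D :: "'d set" and p a :: "'d \<Rightarrow> 'd" and d :: 'd
  assumes perm_on_p: "perm_on p D" and involution: "involution_on a D"
    and dart: "d \<in> D" and not_fixed: "a d \<noteq> d"
begin

abbreviation "rest \<equiv> D - {d, a d}"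
abbreviation "marks \<equiv> markers p d (a d)"
abbreviation "new_D \<equiv> new_darts D p d (a d)"
abbreviation "new_a \<equiv> new_alp a p d (a d)"
abbreviation "new_p \<equiv> new_perm D p d (a d)"

lemma other_dart: "a d \<in> D" "a (a d) = d"
  using involution dart by auto

lemma new_D_eq: "new_D = rest \<union> marks"
  unfolding new_darts_def ..

lemma alp_rest: "x \<in> rest \<Longrightarrow> a x \<in> rest"
  using involution other_dart by (metis Diff_iff insertCI insertE singletonD)

lemma new_alp_rest: "x \<in> rest \<Longrightarrow> new_a x = a x"
  using markers_subset[of p d "a d"] unfolding new_alp_def by auto

lemma new_alp_marks: "x \<in> marks \<Longrightarrow> new_a x = x"
  unfolding new_alp_def by simp

lemma involution_new_alp: "involution_on new_a new_D"
proof
  fix x assume "x \<in> new_D"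
  then consider "x \<in> rest" | "x \<in> marks" unfolding new_D_eq by blast
  then show "new_a x \<in> new_D \<and> new_a (new_a x) = x"
  proof cases
    case 1
    then show ?thesis
      using alp_rest new_alp_rest[of x] new_alp_rest[of "a x"] involution new_D_eq by auto
  qed (use new_alp_marks new_D_eq in auto)
qed

lemma new_perm_rest:
  assumes "x \<in> rest" shows "new_p x = sub_perm p rest x"
  unfolding new_perm_def if_P[OF assms] by (rule skip_eq_sub_perm[OF perm_on_p assms])

lemma new_perm_out: "x \<notin> rest \<Longrightarrow> new_p x = x"
  unfolding new_perm_def by auto

lemma label_new_perm:
  assumes "\<forall>y\<in>{d, a d}. L (p y) = L y" "x \<in> rest"
  shows "L (new_p x) = L (p x)"
  using sub_perm_label[OF perm_on_p _ assms(2), of L] assms(1) new_perm_rest[OF assms(2)] by auto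

lemma image_new_darts:
  assumes "\<forall>y\<in>{d, a d}. L (p y) = L y"
  shows "L ` new_D = L ` D"
  unfolding new_darts_def
  by (rule image_remove_two[OF perm_on_p dart other_dart(1)]) (use not_fixed assms in auto)

lemma dart_pairs_new_alp:
  assumes A: "A \<subseteq> dart_pairs a D" and avoid: "\<Union>A \<subseteq> rest"
  shows "A \<subseteq> dart_pairs new_a new_D"
proof
  fix ed assume ed: "ed \<in> A"
  then obtain y where y: "y \<in> D" "ed = {y, a y}" using A by blast
  then have "y \<in> rest" using ed avoid by blast
  then show "ed \<in> dart_pairs new_a new_D" using y new_alp_rest new_D_eq by auto
qed

lemma edges_new_alp:
  "{{x, new_a x} | x. x \<in> new_D \<and> new_a x \<noteq> x} = {{x, a x} | x. x \<in> D \<and> a x \<noteq> x} - {{d, a d}}"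
proof (intro equalityI subsetI)
  fix ed assume "ed \<in> {{x, new_a x} | x. x \<in> new_D \<and> new_a x \<noteq> x}"
  then obtain x where x: "x \<in> new_D" "new_a x \<noteq> x" "ed = {x, new_a x}" by blast
  then have "x \<in> rest" using new_alp_marks new_D_eq by auto
  then show "ed \<in> {{x, a x} | x. x \<in> D \<and> a x \<noteq> x} - {{d, a d}}"
    using x new_alp_rest[of x] by auto
next
  fix ed assume "ed \<in> {{x, a x} | x. x \<in> D \<and> a x \<noteq> x} - {{d, a d}}"
  then obtain x where x: "x \<in> D" "a x \<noteq> x" "ed = {x, a x}" "ed \<noteq> {d, a d}" by blast
  then have "x \<in> rest" using other_dart by auto
  then show "ed \<in> {{x, new_a x} | x. x \<in> new_D \<and> new_a x \<noteq> x}"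
    using x new_alp_rest[of x] new_D_eq by auto
qed

context
  fixes A :: "'d set set"
  assumes A: "A \<subseteq> dart_pairs a D" and unused: "{d, a d} \<notin> A"
begin

lemma Union_unused: "\<Union>A \<subseteq> rest"
  using Union_dart_pairs_avoid[OF involution A dart] dart_pairs_Union_subset[OF involution A]
    unused by auto

lemma new_alp_Union_unused: "\<forall>x\<in>\<Union>A. new_a x = a x"
  using new_alp_rest Union_unused by blast

lemma comps_delete_unused_edge:
  assumes L: "\<forall>x\<in>D. lab (p x) = lab x"
  shows "blocks new_D lab = blocks D lab" "comps new_D new_a lab A = comps D a lab A"
proof -
  show bl: "blocks new_D lab = blocks D lab"
    unfolding blocks_def using image_new_darts L dart other_dart by auto
  have "sym_pairs lab (lab \<circ> new_a) (\<Union>A) = sym_pairs lab (lab \<circ> a) (\<Union>A)"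
    using new_alp_Union_unused by (intro sym_pairs_cong) simp
  then show "comps new_D new_a lab A = comps D a lab A"
    unfolding comps_eq_component_of bl by simp
qed

lemma label_deleted_rotation:
  assumes L: "\<forall>x\<in>D. lab (p x) = lab x" and s': "\<forall>x\<in>new_D. s' x = new_p x"
  shows "\<forall>x\<in>new_D. lab (s' x) = lab x"
proof
  fix x assume x: "x \<in> new_D"
  show "lab (s' x) = lab x"
  proof (cases "x \<in> rest")
    case True
    have "\<forall>y\<in>{d, a d}. lab (p y) = lab y" using L dart other_dart by auto
    then have "lab (new_p x) = lab (p x)" by (rule label_new_perm[OF _ True])
    then show ?thesis using s' x L True by simp
  qed (use s' x new_perm_out in simp)
qed

text \<open>The darts of the deleted edge are not in \<open>\<Union>A\<close>, so \<open>restrict_alp a (\<Union>A)\<close> fixes them.\<close>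
lemma deleted_face_perm_first_return:
  assumes s': "\<forall>x\<in>new_D. s' x = new_p x" and y: "y \<in> rest"
  shows "(s' \<circ> restrict_alp new_a (\<Union>A)) y = sub_perm (p \<circ> restrict_alp a (\<Union>A)) rest y"
proof -
  have t_rest: "restrict_alp a (\<Union>A) y \<in> rest"
    using y alp_rest unfolding restrict_alp_def by auto
  have "restrict_alp new_a (\<Union>A) y = restrict_alp a (\<Union>A) y"
    using new_alp_Union_unused unfolding restrict_alp_def by (cases "y \<in> \<Union>A") auto
  moreover have "sub_perm (p \<circ> restrict_alp a (\<Union>A)) rest y = sub_perm p rest (restrict_alp a (\<Union>A) y)"
    by (rule sub_perm_comp[OF perm_on_p _ y])
      (use Union_unused alp_rest in \<open>auto simp: restrict_alp_def\<close>)
  moreover have "s' (restrict_alp a (\<Union>A) y) = sub_perm p rest (restrict_alp a (\<Union>A) y)"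
    using s' new_perm_rest[OF t_rest] t_rest new_D_eq by simp
  ultimately show ?thesis by simp
qed

lemma card_sub_faces_delete_unused_edge:
  assumes L: "\<forall>x\<in>D. lab (p x) = lab x" and s': "\<forall>x\<in>new_D. s' x = new_p x"
  shows "card {Fc \<in> sub_faces new_D s' new_a A. \<exists>x\<in>Fc. lab x \<in> K}
       = card {Fc \<in> sub_faces D p a A. \<exists>x\<in>Fc. lab x \<in> K}"
proof -
  have marks_eq: "markers (p \<circ> restrict_alp a (\<Union>A)) d (a d) = marks"
    by (rule markers_cong) (use Union_unused in \<open>auto simp: restrict_alp_def\<close>)
  show ?thesis
  proof (rule card_sub_faces_remove_two[OF perm_on_p involution A L dart other_dart(1)])
    show "d \<noteq> a d" using not_fixed by simp
    show "new_D = rest \<union> markers (p \<circ> restrict_alp a (\<Union>A)) d (a d)"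
      using marks_eq new_D_eq by simp
    show "involution_on new_a new_D" by (rule involution_new_alp)
    show "A \<subseteq> dart_pairs new_a new_D" by (rule dart_pairs_new_alp[OF A Union_unused])
    show "\<forall>x\<in>new_D. lab (s' x) = lab x" by (rule label_deleted_rotation[OF L s'])
    show "\<forall>y\<in>rest. (s' \<circ> restrict_alp new_a (\<Union>A)) y = sub_perm (p \<circ> restrict_alp a (\<Union>A)) rest y"
      using deleted_face_perm_first_return[OF s'] by blast
    show "\<forall>m\<in>markers (p \<circ> restrict_alp a (\<Union>A)) d (a d). (s' \<circ> restrict_alp new_a (\<Union>A)) m = m"
    proof
      fix m assume "m \<in> markers (p \<circ> restrict_alp a (\<Union>A)) d (a d)"
      then have m: "m \<in> marks" "m \<notin> rest" using marks_eq markers_subset[of p d "a d"] by auto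
      then have "m \<notin> \<Union>A" "m \<in> new_D" using Union_unused new_D_eq by auto
      then show "(s' \<circ> restrict_alp new_a (\<Union>A)) m = m"
        using s' new_perm_out[OF m(2)] unfolding restrict_alp_def by simp
    qed
    show "\<forall>y\<in>{d, a d}. lab ((p \<circ> restrict_alp a (\<Union>A)) y) = lab y"
      using Union_unused L dart other_dart unfolding restrict_alp_def by auto
  qed
qed

lemma half_term_delete_unused_edge:
  assumes L: "\<forall>x\<in>D. lab (p x) = lab x" and s': "\<forall>x\<in>new_D. s' x = new_p x"
  shows "half_term new_D s' new_a lab w A z zs = half_term D p a lab w A z zs"
  unfolding half_term_def nullity_def twice_g_def comps_delete_unused_edge[OF L]
    card_sub_faces_delete_unused_edge[OF L s'] ..

end

end

locale edge_contraction = edge_removal D "s \<circ> a" a d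
  for D :: "'d set" and s a :: "'d \<Rightarrow> 'd" and d :: 'd +
  assumes perm_on_s: "perm_on s D" and alp_out: "\<forall>x. x \<notin> D \<longrightarrow> a x = x"
begin

lemma alp_alp [simp]: "a (a x) = x"
  using involution alp_out by (cases "x \<in> D") auto

lemma finite_darts: "finite D" "finite new_D"
  using perm_on_s unfolding perm_on_def new_D_eq by (auto intro: finite_subset[OF markers_subset])

context
  fixes A :: "'d set set" and lab :: "'d \<Rightarrow> 'b"
  assumes A: "A \<subseteq> dart_pairs a D" and used: "{d, a d} \<in> A" and L: "\<forall>x\<in>D. lab (s x) = lab x"
begin

abbreviation "merge_ends \<equiv> merge (lab d) (lab (a d))"

lemma Union_remove_used: "\<Union>(A - {{d, a d}}) = \<Union>A - {d, a d}" "\<Union>(A - {{d, a d}}) \<subseteq> rest"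
  using Union_dart_pairs_avoid[OF involution A dart] dart_pairs_Union_subset[OF involution A] used
  by blast+

lemma merged_label_removed: "\<forall>y\<in>{d, a d}. (merge_ends \<circ> lab) ((s \<circ> a) y) = (merge_ends \<circ> lab) y"
  using L dart other_dart unfolding merge_def by auto

lemma blocks_contract: "blocks new_D (merge_ends \<circ> lab) = merge_ends ` blocks D lab"
  unfolding blocks_def image_new_darts[OF merged_label_removed] by (rule image_comp[symmetric])

lemma comps_contract:
  "comps new_D new_a (merge_ends \<circ> lab) (A - {{d, a d}}) = image merge_ends ` comps D a lab A"
proof -
  define E where "E = sym_pairs lab (lab \<circ> a) (\<Union>A)"
  define E' where "E' = sym_pairs (merge_ends \<circ> lab) (merge_ends \<circ> lab \<circ> a) (\<Union>A - {d, a d})"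
  have "sym_pairs (merge_ends \<circ> lab) (merge_ends \<circ> lab \<circ> new_a) (\<Union>(A - {{d, a d}})) = E'"
    unfolding E'_def Union_remove_used(1)[symmetric]
  proof (intro sym_pairs_cong ballI conjI)
    fix x assume "x \<in> \<Union>(A - {{d, a d}})"
    then have "x \<in> rest" using Union_remove_used(2) by blast
    then show "(merge_ends \<circ> lab \<circ> new_a) x = (merge_ends \<circ> lab \<circ> a) x" using new_alp_rest by simp
  qed simp
  then have "comps new_D new_a (merge_ends \<circ> lab) (A - {{d, a d}}) = component_of (merge_ends ` blocks D lab) E' ` (merge_ends ` blocks D lab)"
    unfolding comps_eq_component_of blocks_contract by simp
  also have "\<dots> = (\<lambda>b. component_of (merge_ends ` blocks D lab) E' (merge_ends b)) ` blocks D lab"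
    by (simp add: image_comp comp_def)
  also have "\<dots> = (\<lambda>b. merge_ends ` component_of (blocks D lab) E b) ` blocks D lab"
  proof (rule image_cong[OF refl])
    have "d \<in> \<Union>A" using used by blast
    then show "component_of (merge_ends ` blocks D lab) E' (merge_ends b) = merge_ends ` component_of (blocks D lab) E b"
      if "b \<in> blocks D lab" for b
      using component_of_merge[OF E_def E'_def refl _ other_dart(2) that] by blast
  qed
  also have "\<dots> = image merge_ends ` comps D a lab A"
    unfolding comps_eq_component_of E_def by (simp add: image_comp comp_def)
  finally show ?thesis .
qed

lemma label_pair_in_relation: "(lab d, lab (a d)) \<in> sym_pairs lab (lab \<circ> a) (\<Union>A)"
  using used unfolding sym_pairs_def by auto

lemma inj_on_merge_comps: "inj_on (image merge_ends) (comps D a lab A)"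
  unfolding comps_eq_component_of[of D a lab A]
  by (rule inj_on_image_merge[OF sym_sym_pairs label_pair_in_relation])

lemma card_comps_contract: "card (comps new_D new_a (merge_ends \<circ> lab) (A - {{d, a d}})) = card (comps D a lab A)"
  unfolding comps_contract by (rule card_image[OF inj_on_merge_comps])

lemma merge_mem_comps:
  assumes "K \<in> comps D a lab A" "x \<in> D"
  shows "merge_ends (lab x) \<in> merge_ends ` K \<longleftrightarrow> lab x \<in> K"
  using merge_mem_component_iff[OF sym_sym_pairs label_pair_in_relation] assms
  unfolding comps_eq_component_of blocks_def by simp

lemma ends_in_comps:
  assumes "K \<in> comps D a lab A"
  shows "lab d \<in> K \<longleftrightarrow> lab (a d) \<in> K"
  using merge_ends_in_component[OF sym_sym_pairs label_pair_in_relation] assms dart other_dart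
  unfolding comps_eq_component_of blocks_def by simp

lemma nullity_contract:
  "nullity D a lab A
     = nullity new_D new_a (merge_ends \<circ> lab) (A - {{d, a d}}) + (2 - card {lab d, lab (a d)})"
proof -
  define B where "B = blocks D lab"
  have ends: "lab d \<in> B" "lab (a d) \<in> B" unfolding B_def blocks_def using dart other_dart by auto
  have finB: "finite B" unfolding B_def blocks_def using finite_darts by simp
  have finA: "finite A" by (rule finite_dart_pairs[OF finite_darts(1) A])
  have cardA: "card (A - {{d, a d}}) + 1 = card A"
    using finA used by (simp add: card_Diff_singleton) (metis Suc_pred card_gt_0_iff empty_iff)
  have cardB: "card (blocks new_D (merge_ends \<circ> lab)) = card B - (if lab d \<noteq> lab (a d) then 1 else 0)"
    unfolding blocks_contract B_def[symmetric] using card_merge_image[OF finB] ends by simp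
  have "card (blocks new_D (merge_ends \<circ> lab))
      \<le> card (A - {{d, a d}}) + card (comps new_D new_a (merge_ends \<circ> lab) (A - {{d, a d}}))"
    by (rule card_blocks_le_edges_plus_comps[OF finite_darts(2) involution_new_alp
          dart_pairs_new_alp]) (use A Union_remove_used(2) in auto)
  then show ?thesis
    using cardA cardB card_comps_contract ends finB card_gt_0_iff[of B]
    unfolding nullity_def B_def[symmetric] by (cases "lab d = lab (a d)") auto
qed

lemma label_contracted_rotation:
  assumes s': "\<forall>x\<in>new_D. s' x = new_p (new_a x)"
  shows "\<forall>x\<in>new_D. (merge_ends \<circ> lab) (s' x) = (merge_ends \<circ> lab) x"
proof
  fix x assume x: "x \<in> new_D"
  show "(merge_ends \<circ> lab) (s' x) = (merge_ends \<circ> lab) x"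
  proof (cases "x \<in> rest")
    case True
    have "s' x = new_p (a x)" using s' x new_alp_rest[OF True] by simp
    moreover have "(merge_ends \<circ> lab) (new_p (a x)) = (merge_ends \<circ> lab) ((s \<circ> a) (a x))"
      by (rule label_new_perm[OF merged_label_removed alp_rest[OF True]])
    ultimately show ?thesis using L True by simp
  next
    case False
    then have "x \<in> marks" using x new_D_eq by blast
    then show ?thesis using s' x False new_alp_marks new_perm_out by simp
  qed
qed

text \<open>The factorisation \<open>s \<circ> restrict_alp a (\<Union>A) = (s \<circ> a) \<circ> (a \<circ> restrict_alp a (\<Union>A))\<close> reduces
  this to the first-return map of \<open>s \<circ> a\<close>, since the second factor fixes both contracted darts.\<close>
lemma contracted_face_perm_first_return:
  assumes s': "\<forall>x\<in>new_D. s' x = new_p (new_a x)" and y: "y \<in> rest"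
  shows "(s' \<circ> restrict_alp new_a (\<Union>(A - {{d, a d}}))) y = sub_perm (s \<circ> restrict_alp a (\<Union>A)) rest y"
proof -
  define t where "t = a \<circ> restrict_alp a (\<Union>A)"
  have dS: "d \<in> \<Union>A" "a d \<in> \<Union>A" using used by auto
  have SD: "\<Union>A \<subseteq> D" by (rule dart_pairs_Union_subset[OF involution A])
  have rest_closed: "restrict_alp a (\<Union>A) y \<in> rest"
    using y alp_rest unfolding restrict_alp_def by auto
  have t_out: "\<forall>y. y \<notin> rest \<longrightarrow> t y = y"
    using dS SD alp_out unfolding t_def restrict_alp_def by auto
  have t_in: "\<forall>y\<in>rest. t y \<in> rest"
    using alp_rest unfolding t_def restrict_alp_def by auto
  have "s \<circ> restrict_alp a (\<Union>A) = (s \<circ> a) \<circ> t" unfolding t_def by (rule ext) simp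
  then have "sub_perm (s \<circ> restrict_alp a (\<Union>A)) rest y = sub_perm (s \<circ> a) rest (t y)"
    using sub_perm_comp[OF perm_on_p _ y t_out t_in] by simp
  moreover have "restrict_alp new_a (\<Union>(A - {{d, a d}})) y = restrict_alp a (\<Union>A) y"
    using y Union_remove_used(1) new_alp_rest unfolding restrict_alp_def by auto
  moreover have "s' (restrict_alp a (\<Union>A) y) = new_p (t y)"
    using s' rest_closed new_D_eq new_alp_rest[OF rest_closed] unfolding t_def by simp
  ultimately show ?thesis using new_perm_rest t_in y by simp
qed

lemma card_sub_faces_contract:
  assumes s': "\<forall>x\<in>new_D. s' x = new_p (new_a x)"
  shows "card {Fc \<in> sub_faces new_D s' new_a (A - {{d, a d}}). \<exists>x\<in>Fc. (merge_ends \<circ> lab) x \<in> K}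
       = card {Fc \<in> sub_faces D s a A. \<exists>x\<in>Fc. (merge_ends \<circ> lab) x \<in> K}"
proof -
  have dS: "d \<in> \<Union>A" "a d \<in> \<Union>A" using used by auto
  have marks_eq: "markers (s \<circ> restrict_alp a (\<Union>A)) d (a d) = marks"
    by (rule markers_cong) (use dS in \<open>auto simp: restrict_alp_def\<close>)
  show ?thesis
  proof (rule card_sub_faces_remove_two[OF perm_on_s involution A _ dart other_dart(1)])
    show "\<forall>x\<in>D. (merge_ends \<circ> lab) (s x) = (merge_ends \<circ> lab) x" using L by simp
    show "d \<noteq> a d" using not_fixed by simp
    show "new_D = rest \<union> markers (s \<circ> restrict_alp a (\<Union>A)) d (a d)"
      using marks_eq new_D_eq by simp
    show "involution_on new_a new_D" by (rule involution_new_alp)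
    show "A - {{d, a d}} \<subseteq> dart_pairs new_a new_D"
      by (rule dart_pairs_new_alp) (use A Union_remove_used(2) in auto)
    show "\<forall>x\<in>new_D. (merge_ends \<circ> lab) (s' x) = (merge_ends \<circ> lab) x"
      by (rule label_contracted_rotation[OF s'])
    show "\<forall>y\<in>rest. (s' \<circ> restrict_alp new_a (\<Union>(A - {{d, a d}}))) y
        = sub_perm (s \<circ> restrict_alp a (\<Union>A)) rest y"
      using contracted_face_perm_first_return[OF s'] by blast
    show "\<forall>x\<in>markers (s \<circ> restrict_alp a (\<Union>A)) d (a d).
        (s' \<circ> restrict_alp new_a (\<Union>(A - {{d, a d}}))) x = x"
    proof
      fix x assume "x \<in> markers (s \<circ> restrict_alp a (\<Union>A)) d (a d)"
      then have x: "x \<in> marks" "x \<notin> rest"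
        using marks_eq markers_subset[of "s \<circ> a" d "a d"] by auto
      then have "x \<notin> \<Union>(A - {{d, a d}})" "x \<in> new_D" using Union_remove_used(2) new_D_eq by auto
      then show "(s' \<circ> restrict_alp new_a (\<Union>(A - {{d, a d}}))) x = x"
        using s' new_alp_marks[OF x(1)] new_perm_out[OF x(2)] unfolding restrict_alp_def by simp
    qed
    show "\<forall>y\<in>{d, a d}. (merge_ends \<circ> lab) ((s \<circ> restrict_alp a (\<Union>A)) y) = (merge_ends \<circ> lab) y"
      using merged_label_removed dS unfolding restrict_alp_def by simp
  qed
qed

lemma card_edges_meeting_contract:
  assumes K: "K \<in> comps D a lab A"
  shows "int (card {ed \<in> A - {{d, a d}}. \<exists>x\<in>ed. (merge_ends \<circ> lab) x \<in> merge_ends ` K})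
       = int (card {ed \<in> A. \<exists>x\<in>ed. lab x \<in> K}) - (if lab d \<in> K then 1 else 0)"
proof -
  define EK where "EK = {ed \<in> A. \<exists>x\<in>ed. lab x \<in> K}"
  have edges: "{ed \<in> A - {{d, a d}}. \<exists>x\<in>ed. (merge_ends \<circ> lab) x \<in> merge_ends ` K} = EK - {{d, a d}}"
    using merge_mem_comps[OF K] dart_pairs_Union_subset[OF involution A] unfolding EK_def by auto
  have e_EK: "{d, a d} \<in> EK \<longleftrightarrow> lab d \<in> K" using used ends_in_comps[OF K] unfolding EK_def by auto
  have finEK: "finite EK" using finite_dart_pairs[OF finite_darts(1) A] unfolding EK_def by simp
  show ?thesis
  proof (cases "lab d \<in> K")
    case True
    then have "{d, a d} \<in> EK" using e_EK by simp
    moreover from this have "card EK > 0" using finEK card_gt_0_iff by blast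
    ultimately show ?thesis
      using True finEK unfolding edges EK_def[symmetric] by (simp add: card_Diff_singleton of_nat_diff)
  next
    case False
    then have "EK - {{d, a d}} = EK" using e_EK by simp
    then show ?thesis using False unfolding edges EK_def[symmetric] by simp
  qed
qed

lemma card_faces_meeting_contract:
  assumes s': "\<forall>x\<in>new_D. s' x = new_p (new_a x)" and K: "K \<in> comps D a lab A"
  shows "card {Fc \<in> sub_faces new_D s' new_a (A - {{d, a d}}). \<exists>x\<in>Fc. (merge_ends \<circ> lab) x \<in> merge_ends ` K}
       = card {Fc \<in> sub_faces D s a A. \<exists>x\<in>Fc. lab x \<in> K}"
proof -
  have "(\<exists>x\<in>Fc. (merge_ends \<circ> lab) x \<in> merge_ends ` K) \<longleftrightarrow> (\<exists>x\<in>Fc. lab x \<in> K)"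
    if "Fc \<in> sub_faces D s a A" for Fc
  proof (rule bex_cong[OF refl])
    fix x assume "x \<in> Fc"
    then have "x \<in> D" using sub_faces_subset[OF perm_on_s involution A that] by blast
    then show "(merge_ends \<circ> lab) x \<in> merge_ends ` K \<longleftrightarrow> lab x \<in> K"
      using merge_mem_comps[OF K] by simp
  qed
  then have "{Fc \<in> sub_faces D s a A. \<exists>x\<in>Fc. (merge_ends \<circ> lab) x \<in> merge_ends ` K}
      = {Fc \<in> sub_faces D s a A. \<exists>x\<in>Fc. lab x \<in> K}"
    by blast
  then show ?thesis using card_sub_faces_contract[OF s'] by simp
qed

text \<open>The edge count of a component drops by one exactly when the contracted edge belongs to it;
  this is compensated by the loss of a block (two ends in different blocks) or by the extra unit
  of weight (a loop of the packaged graph).\<close>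
lemma twice_g_contract:
  assumes s': "\<forall>x\<in>new_D. s' x = new_p (new_a x)" and K: "K \<in> comps D a lab A"
  shows "twice_g new_D s' new_a (merge_ends \<circ> lab) (merged_weight w (lab d) (lab (a d)))
           (A - {{d, a d}}) (merge_ends ` K)
       = twice_g D s a lab w A K"
proof -
  have "finite K"
    using K finite_darts(1) finite_subset unfolding comps_def comp_def blocks_def Let_def by auto
  then have "int (card (merge_ends ` K)) = int (card K) - (if lab d \<noteq> lab (a d) \<and> lab d \<in> K then 1 else 0)"
    and "(\<Sum>b\<in>merge_ends ` K. merged_weight w (lab d) (lab (a d)) b)
      = (\<Sum>b\<in>K. w b) + (if lab d = lab (a d) \<and> lab d \<in> K then 1 else 0)"
    using card_merge_image[OF _ ends_in_comps[OF K]] sum_merged_weight[OF _ ends_in_comps[OF K]]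
      ends_in_comps[OF K] card_gt_0_iff[of K] by auto
  then show ?thesis
    unfolding twice_g_def card_faces_meeting_contract[OF s' K]
    using card_edges_meeting_contract[OF K]
    by (cases "lab d = lab (a d)"; cases "lab d \<in> K") simp_all
qed

lemma half_term_contract_used_edge:
  assumes s': "\<forall>x\<in>new_D. s' x = new_p (new_a x)"
  shows "half_term D s a lab w A z zs
       = z ^ (2 - card {lab d, lab (a d)})
         * half_term new_D s' new_a (merge_ends \<circ> lab) (merged_weight w (lab d) (lab (a d)))
             (A - {{d, a d}}) z zs"
proof -
  have "(\<Prod>K'\<in>comps new_D new_a (merge_ends \<circ> lab) (A - {{d, a d}}).
          zs (twice_g new_D s' new_a (merge_ends \<circ> lab) (merged_weight w (lab d) (lab (a d)))
                (A - {{d, a d}}) K'))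
      = (\<Prod>K\<in>comps D a lab A. zs (twice_g D s a lab w A K))"
    unfolding comps_contract
    by (subst prod.reindex[OF inj_on_merge_comps]) (simp add: twice_g_contract[OF s'])
  then show ?thesis
    unfolding half_term_def nullity_contract power_add by (simp add: ac_simps)
qed

end

end

lemma packaged_ribbon_graph_maps:
  assumes "packaged_ribbon_graph P"
  shows "perm_on (sig P) (darts P)" "perm_on (phi P) (darts P)"
    "involution_on (alp P) (darts P)" "\<forall>x. x \<notin> darts P \<longrightarrow> alp P x = x"
    "phi P \<circ> alp P = sig P" "sig P \<circ> alp P = phi P"
    "\<forall>x\<in>darts P. vlab P (sig P x) = vlab P x" "\<forall>x\<in>darts P. flab P (phi P x) = flab P x"
proof -
  have fin: "finite (darts P)" and sig: "sig P permutes darts P" and alp: "alp P permutes darts P"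
    and inv: "\<forall>x\<in>darts P. alp P (alp P x) = x"
    using assms unfolding packaged_ribbon_graph_def by auto
  show "perm_on (sig P) (darts P)" by (rule permutes_perm_on[OF fin sig])
  show inv': "involution_on (alp P) (darts P)" using inv permutes_in_image[OF alp] by auto
  show out: "\<forall>x. x \<notin> darts P \<longrightarrow> alp P x = x" using permutes_not_in[OF alp] by auto
  have "alp P (alp P x) = x" for x using inv out by (cases "x \<in> darts P") auto
  then show "phi P \<circ> alp P = sig P" "sig P \<circ> alp P = phi P" unfolding phi_def by auto
  show "perm_on (phi P) (darts P)"
    unfolding phi_def by (rule perm_on_comp[OF permutes_perm_on[OF fin sig] permutes_perm_on[OF fin alp]])
  show "\<forall>x\<in>darts P. vlab P (sig P x) = vlab P x" "\<forall>x\<in>darts P. flab P (phi P x) = flab P x"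
    using assms unfolding packaged_ribbon_graph_def by auto
qed

lemma edges_subset_dart_pairs: "edges P \<subseteq> dart_pairs (alp P) (darts P)"
  unfolding edges_def by blast

lemma edge_contraction_packaged:
  assumes P: "packaged_ribbon_graph P" and d: "d \<in> darts P" "alp P d \<noteq> d"
  shows "edge_contraction (darts P) (phi P) (alp P) d" "edge_contraction (darts P) (sig P) (alp P) d"
  using packaged_ribbon_graph_maps[OF P] d
  by (auto intro!: edge_contraction.intro edge_removal.intro edge_contraction_axioms.intro)

lemma pdelete_simps:
  "darts (pdelete P d) = new_darts (darts P) (sig P) d (alp P d)"
  "sig (pdelete P d) = new_perm (darts P) (sig P) d (alp P d)"
  "alp (pdelete P d) = new_alp (alp P) (sig P) d (alp P d)"
  "vlab (pdelete P d) = vlab P" "wV (pdelete P d) = wV P"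
  "flab (pdelete P d) = merge (flab P d) (flab P (alp P d)) \<circ> flab P"
  "wF (pdelete P d) = merged_weight (wF P) (flab P d) (flab P (alp P d))"
  by (auto simp: pdelete_def Let_def merge_def merged_weight_def fun_eq_iff)

lemma pcontract_simps:
  "darts (pcontract P d) = new_darts (darts P) (phi P) d (alp P d)"
  "sig (pcontract P d) = new_perm (darts P) (phi P) d (alp P d) \<circ> new_alp (alp P) (phi P) d (alp P d)"
  "alp (pcontract P d) = new_alp (alp P) (phi P) d (alp P d)"
  "flab (pcontract P d) = flab P" "wF (pcontract P d) = wF P"
  "vlab (pcontract P d) = merge (vlab P d) (vlab P (alp P d)) \<circ> vlab P"
  "wV (pcontract P d) = merged_weight (wV P) (vlab P d) (vlab P (alp P d))"
  by (auto simp: pcontract_def Let_def merge_def merged_weight_def fun_eq_iff)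

lemma edge_removal_packaged:
  assumes P: "packaged_ribbon_graph P" and d: "d \<in> darts P" "alp P d \<noteq> d"
  shows "edge_removal (darts P) (sig P) (alp P) d" "edge_removal (darts P) (phi P) (alp P) d"
  using packaged_ribbon_graph_maps[OF P] d by (auto intro!: edge_removal.intro)

lemma edges_pdelete_pcontract:
  assumes P: "packaged_ribbon_graph P" and d: "d \<in> darts P" "alp P d \<noteq> d"
  shows "edges (pdelete P d) = edges P - {{d, alp P d}}" "edges (pcontract P d) = edges P - {{d, alp P d}}"
  unfolding edges_def pdelete_simps pcontract_simps
  by (rule edge_removal.edges_new_alp[OF edge_removal_packaged(1)[OF P d]],
      rule edge_removal.edges_new_alp[OF edge_removal_packaged(2)[OF P d]])

definition tutte_term :: "('d, 'b, 'c) pmap \<Rightarrow> 'd set set \<Rightarrow> 'a::comm_ring_1 \<Rightarrow> (int \<Rightarrow> 'a) \<Rightarrow> 'a \<Rightarrow> (int \<Rightarrow> 'a) \<Rightarrow> 'a" where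
  "tutte_term P A x xs y ys =
     half_term (darts P) (phi P) (alp P) (flab P) (wF P) (edges P - A) x xs *
     half_term (darts P) (sig P) (alp P) (vlab P) (wV P) A y ys"

lemma pTutte_eq_sum_tutte_term: "pTutte P x xs y ys = (\<Sum>A\<in>Pow (edges P). tutte_term P A x xs y ys)"
  unfolding pTutte_def tutte_term_def ..

text \<open>Deleting an edge outside \<open>A\<close> leaves the vertex side alone and, in the dual, contracts an edge
  of the complement.\<close>
lemma tutte_term_pdelete:
  assumes P: "packaged_ribbon_graph P" and d: "d \<in> darts P" "alp P d \<noteq> d"
    and A: "A \<subseteq> edges P - {{d, alp P d}}"
  shows "tutte_term P A x xs y ys = x ^ (2 - eta P d) * tutte_term (pdelete P d) A x xs y ys"
proof -
  note maps = packaged_ribbon_graph_maps[OF P]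
  have E: "edges P - A \<subseteq> dart_pairs (alp P) (darts P)" "A \<subseteq> dart_pairs (alp P) (darts P)"
    using A edges_subset_dart_pairs[of P] by blast+
  have e: "{d, alp P d} \<in> edges P - A" "{d, alp P d} \<notin> A"
    using A d unfolding edges_def by blast+
  have phi_pdelete: "phi (pdelete P d)
      = new_perm (darts P) (sig P) d (alp P d) \<circ> new_alp (alp P) (sig P) d (alp P d)"
    unfolding phi_def pdelete_simps ..
  have "half_term (darts P) (phi P) (alp P) (flab P) (wF P) (edges P - A) x xs
      = x ^ (2 - eta P d) * half_term (darts (pdelete P d)) (phi (pdelete P d)) (alp (pdelete P d))
          (flab (pdelete P d)) (wF (pdelete P d)) (edges (pdelete P d) - A) x xs"
    using edge_contraction.half_term_contract_used_edge[OF edge_contraction_packaged(1)[OF P d]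
        E(1) e(1) maps(8), of "phi (pdelete P d)"]
    unfolding maps(5) eta_def edges_pdelete_pcontract(1)[OF P d]
    by (simp add: pdelete_simps phi_pdelete Diff_insert2[symmetric] Diff_insert[symmetric] insert_commute)
  moreover have "half_term (darts (pdelete P d)) (sig (pdelete P d)) (alp (pdelete P d))
          (vlab (pdelete P d)) (wV (pdelete P d)) A y ys
      = half_term (darts P) (sig P) (alp P) (vlab P) (wV P) A y ys"
    using edge_removal.half_term_delete_unused_edge[OF edge_removal_packaged(1)[OF P d]
        E(2) e(2) maps(7), of "sig (pdelete P d)"]
    by (simp add: pdelete_simps)
  ultimately show ?thesis unfolding tutte_term_def by (simp add: ac_simps)
qed

text \<open>Contracting an edge of \<open>A\<close> contracts it on the vertex side and, in the dual, deletes an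
  edge outside the complement.\<close>
lemma tutte_term_pcontract:
  assumes P: "packaged_ribbon_graph P" and d: "d \<in> darts P" "alp P d \<noteq> d"
    and A: "A \<subseteq> edges P - {{d, alp P d}}"
  shows "tutte_term P (insert {d, alp P d} A) x xs y ys
       = y ^ (2 - mu P d) * tutte_term (pcontract P d) A x xs y ys"
proof -
  note maps = packaged_ribbon_graph_maps[OF P]
  have e: "{d, alp P d} \<in> edges P" using d unfolding edges_def by blast
  have E: "edges P - insert {d, alp P d} A \<subseteq> dart_pairs (alp P) (darts P)"
    "insert {d, alp P d} A \<subseteq> dart_pairs (alp P) (darts P)"
    using A e edges_subset_dart_pairs[of P] by blast+
  have A_e: "A - {{d, alp P d}} = A" using A by blast
  have phi_pcontract: "\<forall>x\<in>darts (pcontract P d).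
      phi (pcontract P d) x = new_perm (darts P) (phi P) d (alp P d) x"
    using edge_removal.involution_new_alp[OF edge_removal_packaged(2)[OF P d]]
    unfolding phi_def pcontract_simps by simp
  have "half_term (darts (pcontract P d)) (phi (pcontract P d)) (alp (pcontract P d))
          (flab (pcontract P d)) (wF (pcontract P d)) (edges (pcontract P d) - A) x xs
      = half_term (darts P) (phi P) (alp P) (flab P) (wF P) (edges P - insert {d, alp P d} A) x xs"
    using edge_removal.half_term_delete_unused_edge[OF edge_removal_packaged(2)[OF P d]
        E(1) _ maps(8) phi_pcontract[unfolded pcontract_simps]]
    unfolding edges_pdelete_pcontract(2)[OF P d]
    by (simp add: pcontract_simps Diff_insert2[symmetric] Diff_insert[symmetric] insert_commute)
  moreover have "half_term (darts P) (sig P) (alp P) (vlab P) (wV P) (insert {d, alp P d} A) y ys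
      = y ^ (2 - mu P d) * half_term (darts (pcontract P d)) (sig (pcontract P d))
          (alp (pcontract P d)) (vlab (pcontract P d)) (wV (pcontract P d)) A y ys"
    using edge_contraction.half_term_contract_used_edge[OF edge_contraction_packaged(2)[OF P d]
        E(2) _ maps(7), of "sig (pcontract P d)"]
    unfolding maps(6) mu_def by (simp add: pcontract_simps A_e)
  ultimately show ?thesis unfolding tutte_term_def by (simp add: ac_simps)
qed

lemma sum_Pow_insert:
  assumes fin: "finite B" and e: "e \<notin> B"
  shows "(\<Sum>X\<in>Pow (insert e B). g X) = (\<Sum>X\<in>Pow B. g X) + (\<Sum>X\<in>Pow B. g (insert e X))"
proof -
  have "inj_on (insert e) (Pow B)"
  proof (rule inj_onI)
    fix X Y assume "X \<in> Pow B" "Y \<in> Pow B" "insert e X = insert e Y"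
    then show "X = Y" using e by (metis PowD insert_ident subsetD)
  qed
  moreover have "Pow B \<inter> insert e ` Pow B = {}" using e by auto
  ultimately show ?thesis
    unfolding Pow_insert using fin by (simp add: sum.union_disjoint sum.reindex)
qed

lemma half_term_no_edges:
  "half_term D s a lab w {} z zs
     = (\<Prod>b\<in>lab ` D. zs (1 - int (card {v \<in> orbits s D. \<exists>x\<in>v. lab x = b}) + int (w b)))"
proof -
  have comps: "comps D a lab {} = (\<lambda>b. {b}) ` blocks D lab"
    unfolding comps_eq_component_of sym_pairs_def
    by (rule image_cong) (auto simp: component_of_empty)
  have inj: "inj_on (\<lambda>b. {b}) (blocks D lab)" by (auto simp: inj_on_def)
  have "sub_faces D s a {} = orbits s D"
    unfolding sub_faces_def orbits_def Let_def by auto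
  then have "twice_g D s a lab w {} {b} = 1 - int (card {v \<in> orbits s D. \<exists>x\<in>v. lab x = b}) + int (w b)"
    for b unfolding twice_g_def by simp
  then show ?thesis
    unfolding half_term_def nullity_def comps prod.reindex[OF inj] card_image[OF inj]
    by (simp add: blocks_def)
qed

lemma pTutte_deletion_contraction:
  assumes P: "packaged_ribbon_graph P" and d: "d \<in> darts P" "alp P d \<noteq> d"
  shows "pTutte P x xs y ys =
           x ^ (2 - eta P d) * pTutte (pdelete P d) x xs y ys
         + y ^ (2 - mu P d) * pTutte (pcontract P d) x xs y ys"
proof -
  define e where "e = {d, alp P d}"
  have e: "e \<in> edges P" using d unfolding e_def edges_def by blast
  have "finite (darts P)" using P unfolding packaged_ribbon_graph_def by simp
  then have "finite (edges P - {e})" using finite_dart_pairs[OF _ edges_subset_dart_pairs[of P]] by simp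
  then have "pTutte P x xs y ys = (\<Sum>A\<in>Pow (edges P - {e}). tutte_term P A x xs y ys)
      + (\<Sum>A\<in>Pow (edges P - {e}). tutte_term P (insert e A) x xs y ys)"
    unfolding pTutte_eq_sum_tutte_term using sum_Pow_insert[of "edges P - {e}" e] insert_Diff[OF e]
    by simp
  also have "(\<Sum>A\<in>Pow (edges P - {e}). tutte_term P A x xs y ys)
      = x ^ (2 - eta P d) * pTutte (pdelete P d) x xs y ys"
    unfolding pTutte_eq_sum_tutte_term edges_pdelete_pcontract[OF P d] sum_distrib_left
    by (intro sum.cong refl tutte_term_pdelete[OF P d]) (auto simp: e_def)
  also have "(\<Sum>A\<in>Pow (edges P - {e}). tutte_term P (insert e A) x xs y ys)
      = y ^ (2 - mu P d) * pTutte (pcontract P d) x xs y ys"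
    unfolding pTutte_eq_sum_tutte_term edges_pdelete_pcontract[OF P d] sum_distrib_left e_def
    by (intro sum.cong refl tutte_term_pcontract[OF P d]) (auto simp: e_def)
  finally show ?thesis .
qed

lemma pTutte_no_edges:
  assumes "edges P = {}"
  shows "pTutte P x xs y ys =
           (\<Prod>c\<in>flab P ` darts P. xs (1 - int (fblock_size P c) + int (wF P c))) *
           (\<Prod>b\<in>vlab P ` darts P. ys (1 - int (vblock_size P b) + int (wV P b)))"
  using assms unfolding pTutte_def fblock_size_def vblock_size_def faces_def vertices_def
  by (simp add: half_term_no_edges)

theorem theorem3p3:
  fixes P :: "('d, 'b, 'c) pmap" and d :: 'd
    and x y :: "'a::comm_ring_1" and xs ys :: "int \<Rightarrow> 'a"
  assumes "packaged_ribbon_graph P"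
  shows "(d \<in> darts P \<and> alp P d \<noteq> d \<longrightarrow>
            pTutte P x xs y ys =
              x ^ (2 - eta P d) * pTutte (pdelete P d) x xs y ys
            + y ^ (2 - mu P d) * pTutte (pcontract P d) x xs y ys)
       \<and> (edges P = {} \<longrightarrow>
            pTutte P x xs y ys =
              (\<Prod>c\<in>flab P ` darts P. xs (1 - int (fblock_size P c) + int (wF P c))) *
              (\<Prod>b\<in>vlab P ` darts P. ys (1 - int (vblock_size P b) + int (wV P b))))"
  using pTutte_deletion_contraction[OF assms] pTutte_no_edges by blast

end
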